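(* Fix $\lambda>0$. Suppose Assumptions (NC) and (B) hold, $\mathbb H\subseteq L_2(W,A,X)$ and a class $\mathbb Q$ with $\pi\mathbb Q\subseteq L_2(Z,A,X)$ satisfy $\mathbb H_0^{\mathrm{obs}}\cap\mathbb H\ne\emptyset$ and $\mathbb Q_0^{\mathrm{obs}}\cap\mathbb Q\ne\emptyset$, and $\mathbb Q'\subseteq L_2(Z,A,X)$, $\mathbb H'\subseteq L_2(W,A,X)$ are star-shaped and satisfy $P_z(\mathbb H-\mathbb H_0^{\mathrm{obs}})\subseteq\mathbb Q'$ and $\pi P_w(\mathbb Q-\mathbb Q_0^{\mathrm{obs}})\subseteq\mathbb H'$. Then $$\mathbb H_0^{\mathrm{obs}}\cap\mathbb H=\operatorname*{argmin}_{h\in\mathbb H}\sup_{q\in\mathbb Q'}\Big\{\mathbb E[q(Z,A,X)(h(W,A,X)-Y)]-\lambda\|q\|_2^2\Big\},$$ $$\mathbb Q_0^{\mathrm{obs}}\cap\mathbb Q=\operatorname*{argmin}_{q\in\mathbb Q}\sup_{h\in\mathbb H'}\Big\{\mathbb E[\pi(A\mid X)q(Z,A,X)h(W,A,X)-(\mathcal T h)(W,X)]-\lambda\|h\|_2^2\Big\}.$$ Moreover, when $\lambda=1/2$ the same conclusions hold without assuming $\mathbb Q',\mathbb H'$ are star-shaped.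
   Context: Setup: random variables $(U,X,A,Z,W,Y)$ with $X$ observed covariates, $A\in\mathcal A$ an action ($\mathcal A$ carries a base measure $\mu$), $Z$ a negative control action, $W$ a negative control outcome, $Y$ real outcome, $U$ an unobserved confounder. Potential outcomes $Y(a),Y(a,z),W(a,z)$. $\pi(a\mid x)$ is a given real contrast function. $f(a\mid u,x)$, $f(a\mid w,x)$ are the conditional densities w.r.t. $\mu$ of $A$ given $(U,X)$ and given $(W,X)$. Assumption (NC): (i) $Y=Y(A,Z)$, $W=W(A,Z)$; (ii) $Y(a,z)=Y(a)$; (iii) $W(a,z)=W$; (iv) $(Z,A)\perp(Y(a),W)\mid(U,X)$ for all $a$; (v) $|\pi(a\mid x)/f(a\mid x,u)|<\infty$ for all $a,x,u$. Bridge sets: $\mathbb H_0=\{h\in L_2(W,A,X):\mathbb E[Y-h\mid A,U,X]=0\}$, $\mathbb Q_0=\{q:\pi q\in L_2(Z,A,X),\ \mathbb E[\pi(A\mid X)(q(Z,A,X)-1/f(A\mid U,X))\mid A,U,X]=0\}$ with $(\pi q)(z,a,x)=\pi(a\mid x)q(z,a,x)$; observed bridge sets $\mathbb H_0^{\mathrm{obs}}=\{h\in L_2(W,A,X):\mathbb E[Y-h(W,A,X)\mid Z,A,X]=0\}$, $\mathbb Q_0^{\mathrm{obs}}=\{q:\pi q\in L_2(Z,A,X),\ \mathbb E[\pi(A\mid X)(q(Z,A,X)-1/f(A\mid W,X))\mid W,A,X]=0\}$. Assumption (B): $\mathbb H_0\ne\emptyset$, $\mathbb Q_0\ne\emptyset$.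 $(\mathcal T h)(w,x)=\int h(w,a,x)\pi(a\mid x)d\mu(a)$. $P_z h=\mathbb E[h(W,A,X)\mid Z,A,X]$, $P_w q=\mathbb E[q(Z,A,X)\mid W,A,X]$; $P_z(\mathbb H-\mathbb H_0^{\mathrm{obs}})=\{P_z(h-h_0):h\in\mathbb H,h_0\in\mathbb H_0^{\mathrm{obs}}\}$, $\pi P_w(\mathbb Q-\mathbb Q_0^{\mathrm{obs}})=\{P_w(\pi q-\pi q_0):q\in\mathbb Q,q_0\in\mathbb Q_0^{\mathrm{obs}}\}$. A set $S$ is star-shaped if $\alpha s\in S$ for all $s\in S$, $\alpha\in[0,1]$. $\|\cdot\|_2$ is the $L_2$ norm under the data distribution. *)

theory Defs
  imports "HOL-Probability.Probability"
begin

definition sig :: "'o measure \<Rightarrow> ('o \<Rightarrow> 'b) \<Rightarrow> 'b measure \<Rightarrow> 'o measure" where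
  "sig M V N = vimage_algebra (space M) V N"

definition cexp :: "'o measure \<Rightarrow> ('o \<Rightarrow> 'b) \<Rightarrow> 'b measure \<Rightarrow> ('o \<Rightarrow> real) \<Rightarrow> 'o \<Rightarrow> real" where
  "cexp M V N f = real_cond_exp M (sig M V N) f"

definition L2 :: "'o measure \<Rightarrow> ('o \<Rightarrow> 'b) \<Rightarrow> 'b measure \<Rightarrow> ('b \<Rightarrow> real) set" where
  "L2 M V N = {g. g \<in> borel_measurable N \<and> integrable M (\<lambda>\<omega>. (g (V \<omega>))\<^sup>2)}"

definition cond_indep ::
  "'o measure \<Rightarrow> ('o \<Rightarrow> 'b) \<Rightarrow> 'b measure \<Rightarrow> ('o \<Rightarrow> 'c) \<Rightarrow> 'c measure
     \<Rightarrow> ('o \<Rightarrow> 'd) \<Rightarrow> 'd measure \<Rightarrow> bool" where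
  "cond_indep M S NS T NT V NV \<longleftrightarrow>
     (\<forall>B\<in>sets NS. \<forall>C\<in>sets NT. AE \<omega> in M.
        cexp M V NV (\<lambda>\<omega>. indicator B (S \<omega>) * indicator C (T \<omega>)) \<omega>
        = cexp M V NV (\<lambda>\<omega>. indicator B (S \<omega>)) \<omega> * cexp M V NV (\<lambda>\<omega>. indicator C (T \<omega>)) \<omega>)"

definition cond_density ::
  "'o measure \<Rightarrow> ('o \<Rightarrow> 'a) \<Rightarrow> 'a measure \<Rightarrow> ('o \<Rightarrow> 'b) \<Rightarrow> 'b measure
     \<Rightarrow> ('a \<Rightarrow> 'b \<Rightarrow> real) \<Rightarrow> bool" where
  "cond_density M A mu V MV f \<longleftrightarrow>
     (\<lambda>p. f (fst p) (snd p)) \<in> borel_measurable (mu \<Otimes>\<^sub>M MV) \<and> (\<forall>a v. 0 \<le> f a v) \<and>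
     (\<forall>B\<in>sets mu. AE \<omega> in M.
        ennreal (cexp M V MV (\<lambda>\<omega>. indicator B (A \<omega>)) \<omega>)
        = (\<integral>\<^sup>+ a. ennreal (f a (V \<omega>)) * indicator B a \<partial>mu))"

definition pimul :: "('a \<Rightarrow> 'x \<Rightarrow> real) \<Rightarrow> ('z \<times> 'a \<times> 'x \<Rightarrow> real) \<Rightarrow> 'z \<times> 'a \<times> 'x \<Rightarrow> real" where
  "pimul pol q = (\<lambda>(z, a, x). pol a x * q (z, a, x))"

definition Tmap :: "'a measure \<Rightarrow> ('a \<Rightarrow> 'x \<Rightarrow> real) \<Rightarrow> ('w \<times> 'a \<times> 'x \<Rightarrow> real) \<Rightarrow> 'w \<Rightarrow> 'x \<Rightarrow> real" where
  "Tmap mu pol h w x = (\<integral>a. h (w, a, x) * pol a x \<partial>mu)"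

definition star_shaped :: "('b \<Rightarrow> real) set \<Rightarrow> bool" where
  "star_shaped S \<longleftrightarrow> (\<forall>s\<in>S. \<forall>\<alpha>::real. 0 \<le> \<alpha> \<and> \<alpha> \<le> 1 \<longrightarrow> (\<lambda>v. \<alpha> * s v) \<in> S)"

definition argmin_on :: "'b set \<Rightarrow> ('b \<Rightarrow> ereal) \<Rightarrow> 'b set" where
  "argmin_on S F = {s \<in> S. \<forall>t\<in>S. F s \<le> F t}"

definition H0 ::
  "'o measure \<Rightarrow> ('o \<Rightarrow> 'u) \<Rightarrow> 'u measure \<Rightarrow> ('o \<Rightarrow> 'x) \<Rightarrow> 'x measure \<Rightarrow> ('o \<Rightarrow> 'a) \<Rightarrow> 'a measure
   \<Rightarrow> ('o \<Rightarrow> 'w) \<Rightarrow> 'w measure \<Rightarrow> ('o \<Rightarrow> real) \<Rightarrow> ('w \<times> 'a \<times> 'x \<Rightarrow> real) set" where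
  "H0 M U MU X MX A mu W MW Y =
     {h \<in> L2 M (\<lambda>\<omega>. (W \<omega>, A \<omega>, X \<omega>)) (MW \<Otimes>\<^sub>M mu \<Otimes>\<^sub>M MX).
        AE \<omega> in M. cexp M (\<lambda>\<omega>. (A \<omega>, U \<omega>, X \<omega>)) (mu \<Otimes>\<^sub>M MU \<Otimes>\<^sub>M MX)
                      (\<lambda>\<omega>. Y \<omega> - h (W \<omega>, A \<omega>, X \<omega>)) \<omega> = 0}"

definition Q0 ::
  "'o measure \<Rightarrow> ('o \<Rightarrow> 'u) \<Rightarrow> 'u measure \<Rightarrow> ('o \<Rightarrow> 'x) \<Rightarrow> 'x measure \<Rightarrow> ('o \<Rightarrow> 'a) \<Rightarrow> 'a measure
   \<Rightarrow> ('o \<Rightarrow> 'z) \<Rightarrow> 'z measure \<Rightarrow> ('a \<Rightarrow> 'x \<Rightarrow> real) \<Rightarrow> ('a \<Rightarrow> 'u \<Rightarrow> 'x \<Rightarrow> real)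
   \<Rightarrow> ('z \<times> 'a \<times> 'x \<Rightarrow> real) set" where
  "Q0 M U MU X MX A mu Z MZ pol fUX =
     {q. pimul pol q \<in> L2 M (\<lambda>\<omega>. (Z \<omega>, A \<omega>, X \<omega>)) (MZ \<Otimes>\<^sub>M mu \<Otimes>\<^sub>M MX) \<and>
        (AE \<omega> in M. cexp M (\<lambda>\<omega>. (A \<omega>, U \<omega>, X \<omega>)) (mu \<Otimes>\<^sub>M MU \<Otimes>\<^sub>M MX)
           (\<lambda>\<omega>. pol (A \<omega>) (X \<omega>) * (q (Z \<omega>, A \<omega>, X \<omega>) - 1 / fUX (A \<omega>) (U \<omega>) (X \<omega>))) \<omega> = 0)}"

definition H0obs ::
  "'o measure \<Rightarrow> ('o \<Rightarrow> 'x) \<Rightarrow> 'x measure \<Rightarrow> ('o \<Rightarrow> 'a) \<Rightarrow> 'a measure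
   \<Rightarrow> ('o \<Rightarrow> 'z) \<Rightarrow> 'z measure \<Rightarrow> ('o \<Rightarrow> 'w) \<Rightarrow> 'w measure \<Rightarrow> ('o \<Rightarrow> real)
   \<Rightarrow> ('w \<times> 'a \<times> 'x \<Rightarrow> real) set" where
  "H0obs M X MX A mu Z MZ W MW Y =
     {h \<in> L2 M (\<lambda>\<omega>. (W \<omega>, A \<omega>, X \<omega>)) (MW \<Otimes>\<^sub>M mu \<Otimes>\<^sub>M MX).
        AE \<omega> in M. cexp M (\<lambda>\<omega>. (Z \<omega>, A \<omega>, X \<omega>)) (MZ \<Otimes>\<^sub>M mu \<Otimes>\<^sub>M MX)
                      (\<lambda>\<omega>. Y \<omega> - h (W \<omega>, A \<omega>, X \<omega>)) \<omega> = 0}"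

definition Q0obs ::
  "'o measure \<Rightarrow> ('o \<Rightarrow> 'x) \<Rightarrow> 'x measure \<Rightarrow> ('o \<Rightarrow> 'a) \<Rightarrow> 'a measure
   \<Rightarrow> ('o \<Rightarrow> 'z) \<Rightarrow> 'z measure \<Rightarrow> ('o \<Rightarrow> 'w) \<Rightarrow> 'w measure
   \<Rightarrow> ('a \<Rightarrow> 'x \<Rightarrow> real) \<Rightarrow> ('a \<Rightarrow> 'w \<Rightarrow> 'x \<Rightarrow> real)
   \<Rightarrow> ('z \<times> 'a \<times> 'x \<Rightarrow> real) set" where
  "Q0obs M X MX A mu Z MZ W MW pol fWX =
     {q. pimul pol q \<in> L2 M (\<lambda>\<omega>. (Z \<omega>, A \<omega>, X \<omega>)) (MZ \<Otimes>\<^sub>M mu \<Otimes>\<^sub>M MX) \<and>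
        (AE \<omega> in M. cexp M (\<lambda>\<omega>. (W \<omega>, A \<omega>, X \<omega>)) (MW \<Otimes>\<^sub>M mu \<Otimes>\<^sub>M MX)
           (\<lambda>\<omega>. pol (A \<omega>) (X \<omega>) * (q (Z \<omega>, A \<omega>, X \<omega>) - 1 / fWX (A \<omega>) (W \<omega>) (X \<omega>))) \<omega> = 0)}"

end

theory Submission
  imports Defs
begin

text \<open>
  Both characterisations reduce to one fact about a penalised adversary: for a class S of
  square-integrable critics containing c, the value sup over s in S of E[s c] - lam E[s^2] is 0
  if c = 0 a.s. and strictly positive otherwise, since the critic alpha c with lam alpha < 1 lies
  in S (by star-shapedness, or with alpha = 1 when lam = 1/2).

  For h in H, fix h0 in the observed bridge set.  As E[Y - h0 | Z,A,X] = 0, the moment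
  E[q (h - Y)] equals E[q c] with c = P_z(h - h0) in Q', and h is an observed bridge iff c = 0.
  For q in Q, fix q0 in the observed bridge set.  Disintegrating the law of A given (W, X) gives
  E[(T h)(W,X)] = E[h pol/f(A|W,X)] = E[h pol q0], so E[pol q h - T h] equals E[h c] with
  c = P_w(pol q - pol q0) in H'.  The disintegration needs f(a|W,X) > 0 wherever pol(a|X) /= 0;
  this follows from (NC)(iv),(v), because given (U,X) the action A is independent of W, so
  f(a|U,X) is also the density of A given (U,X,W).
\<close>

lemma sigma_finite_subalgebra_sig:
  assumes "prob_space M" and "V \<in> measurable M N"
  shows "sigma_finite_subalgebra M (sig M V N)"
proof -
  interpret prob_space M by fact
  have "subalgebra M (sig M V N)"
    unfolding subalgebra_def sig_def
    using assms(2) by (auto simp: sets_vimage_algebra2 measurable_space intro!: measurable_sets)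
  then have "finite_measure_subalgebra M (sig M V N)"
    unfolding finite_measure_subalgebra_def finite_measure_subalgebra_axioms_def
    using finite_measure_axioms by simp
  then show ?thesis by (rule finite_measure_subalgebra_is_sigma_finite)
qed

lemma measurable_sig_comp:
  assumes "g \<in> borel_measurable N" and "V \<in> measurable M N"
  shows "(\<lambda>\<omega>. g (V \<omega>)) \<in> borel_measurable (sig M V N)"
  unfolding sig_def
  by (rule measurable_compose[OF measurable_vimage_algebra1 assms(1)])
     (rule Pi_I, rule measurable_space[OF assms(2)])

section \<open>Square-integrable functions and penalised critics\<close>

lemma integrable_mult_square_integrable:
  fixes f g :: "'o \<Rightarrow> real"
  assumes [measurable]: "f \<in> borel_measurable M" "g \<in> borel_measurable M"
    and "integrable M (\<lambda>x. (f x)\<^sup>2)" and "integrable M (\<lambda>x. (g x)\<^sup>2)"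
  shows "integrable M (\<lambda>x. f x * g x)"
proof (rule Bochner_Integration.integrable_bound)
  show "integrable M (\<lambda>x. (f x)\<^sup>2 + (g x)\<^sup>2)" using assms by auto
  have "\<bar>f x * g x\<bar> \<le> (f x)\<^sup>2 + (g x)\<^sup>2" for x
  proof -
    have "2 * (\<bar>f x\<bar> * \<bar>g x\<bar>) \<le> (f x)\<^sup>2 + (g x)\<^sup>2"
      using sum_squares_bound[of "\<bar>f x\<bar>" "\<bar>g x\<bar>"] by (simp add: mult.assoc)
    moreover have "0 \<le> \<bar>f x\<bar> * \<bar>g x\<bar>" by simp
    ultimately show ?thesis unfolding abs_mult by linarith
  qed
  then show "AE x in M. norm (f x * g x) \<le> norm ((f x)\<^sup>2 + (g x)\<^sup>2)" by simp
qed measurable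

lemma integrable_of_square_integrable:
  fixes f :: "'o \<Rightarrow> real"
  assumes "finite_measure M" and "f \<in> borel_measurable M" and "integrable M (\<lambda>x. (f x)\<^sup>2)"
  shows "integrable M f"
  using integrable_mult_square_integrable[OF assms(2) _ assms(3), of "\<lambda>_. 1"]
    finite_measure.integrable_const[OF assms(1)] by auto

lemma L2_comp_measurable:
  assumes "g \<in> L2 M V N" and "V \<in> measurable M N"
  shows "(\<lambda>\<omega>. g (V \<omega>)) \<in> borel_measurable M"
  using assms unfolding L2_def by auto

lemma integrable_L2_comp:
  assumes "finite_measure M" and "g \<in> L2 M V N" and "V \<in> measurable M N"
  shows "integrable M (\<lambda>\<omega>. g (V \<omega>))"
  using integrable_of_square_integrable[OF assms(1) L2_comp_measurable[OF assms(2,3)]] assms(2)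
  unfolding L2_def by simp

lemma integrable_L2_comp_mult:
  assumes "g \<in> L2 M V N" and "g' \<in> L2 M V' N'"
    and "V \<in> measurable M N" and "V' \<in> measurable M N'"
  shows "integrable M (\<lambda>\<omega>. g (V \<omega>) * g' (V' \<omega>))"
  using assms L2_comp_measurable[OF assms(1,3)] L2_comp_measurable[OF assms(2,4)]
  unfolding L2_def by (intro integrable_mult_square_integrable) auto

definition penalized_pairing ::
  "'o measure \<Rightarrow> ('o \<Rightarrow> 'b) \<Rightarrow> real \<Rightarrow> ('b \<Rightarrow> real) \<Rightarrow> ('b \<Rightarrow> real) \<Rightarrow> real" where
  "penalized_pairing M V lam t s =
     (\<integral>\<omega>. s (V \<omega>) * t (V \<omega>) \<partial>M) - lam * (\<integral>\<omega>. (s (V \<omega>))\<^sup>2 \<partial>M)"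

lemma SUP_penalized_pairing_eq_0:
  assumes S: "S \<subseteq> L2 M V N" and V: "V \<in> measurable M N" and t: "t \<in> S"
    and lam: "0 \<le> lam" and t0: "AE \<omega> in M. t (V \<omega>) = 0"
  shows "(SUP s\<in>S. ereal (penalized_pairing M V lam t s)) = 0"
proof (rule antisym)
  have pairing_0: "(\<integral>\<omega>. s (V \<omega>) * t (V \<omega>) \<partial>M) = 0" if "s \<in> S" for s
  proof -
    have [measurable]: "(\<lambda>\<omega>. s (V \<omega>)) \<in> borel_measurable M" "(\<lambda>\<omega>. t (V \<omega>)) \<in> borel_measurable M"
      using that t S V by (auto intro: L2_comp_measurable)
    have "(\<integral>\<omega>. s (V \<omega>) * t (V \<omega>) \<partial>M) = (\<integral>\<omega>. 0 \<partial>M)"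
      by (rule integral_cong_AE) (measurable, use t0 in auto)
    then show ?thesis by simp
  qed
  have "penalized_pairing M V lam t s \<le> 0" if "s \<in> S" for s
    using pairing_0[OF that] lam by (simp add: penalized_pairing_def)
  then show "(SUP s\<in>S. ereal (penalized_pairing M V lam t s)) \<le> 0"
    by (intro SUP_least) auto
  have "penalized_pairing M V lam t t = 0"
    using pairing_0[OF t] by (simp add: penalized_pairing_def power2_eq_square)
  then show "0 \<le> (SUP s\<in>S. ereal (penalized_pairing M V lam t s))"
    using SUP_upper[OF t, of "\<lambda>s. ereal (penalized_pairing M V lam t s)"]
    by (simp add: zero_ereal_def)
qed

lemma SUP_penalized_pairing_pos:
  assumes S: "S \<subseteq> L2 M V N" and V: "V \<in> measurable M N" and t: "t \<in> S"
    and lam: "0 < lam" and shape: "star_shaped S \<or> lam < 1"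
    and t0: "\<not> (AE \<omega> in M. t (V \<omega>) = 0)"
  shows "0 < (SUP s\<in>S. ereal (penalized_pairing M V lam t s))"
proof -
  define c where "c = (\<integral>\<omega>. (t (V \<omega>))\<^sup>2 \<partial>M)"
  have "integrable M (\<lambda>\<omega>. (t (V \<omega>))\<^sup>2)" using S t unfolding L2_def by auto
  then have "c \<noteq> 0"
    using t0 integral_nonneg_eq_0_iff_AE[of M "\<lambda>\<omega>. (t (V \<omega>))\<^sup>2"] by (auto simp: c_def)
  then have c: "0 < c" unfolding c_def by (simp add: less_le)
  \<comment> \<open>a scaled critic alpha t beats 0 as soon as lam alpha < 1\<close>
  obtain \<alpha> where \<alpha>: "0 < \<alpha>" "lam * \<alpha> < 1" and \<alpha>t: "(\<lambda>v. \<alpha> * t v) \<in> S"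
  proof (cases "lam < 1")
    case True
    then show ?thesis using that[of 1] t by simp
  next
    case False
    define \<alpha> where "\<alpha> = 1 / (2 * lam)"
    have "0 < \<alpha>" "\<alpha> \<le> 1" "lam * \<alpha> < 1" using lam False by (auto simp: \<alpha>_def)
    moreover have "(\<lambda>v. \<alpha> * t v) \<in> S"
      using shape False t \<open>0 < \<alpha>\<close> \<open>\<alpha> \<le> 1\<close> unfolding star_shaped_def by auto
    ultimately show ?thesis using that by blast
  qed
  have "(\<integral>\<omega>. \<alpha> * t (V \<omega>) * t (V \<omega>) \<partial>M) = \<alpha> * c"
    using integral_mult_right_zero[of M \<alpha> "\<lambda>\<omega>. t (V \<omega>) * t (V \<omega>)"]
    by (simp add: c_def power2_eq_square mult.assoc)
  moreover have "(\<integral>\<omega>. (\<alpha> * t (V \<omega>))\<^sup>2 \<partial>M) = \<alpha>\<^sup>2 * c"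
    using integral_mult_right_zero[of M "\<alpha>\<^sup>2" "\<lambda>\<omega>. (t (V \<omega>))\<^sup>2"]
    by (simp add: c_def power_mult_distrib)
  ultimately have "penalized_pairing M V lam t (\<lambda>v. \<alpha> * t v) = \<alpha> * c - lam * (\<alpha>\<^sup>2 * c)"
    by (simp add: penalized_pairing_def)
  also have "\<dots> = \<alpha> * c * (1 - lam * \<alpha>)" by (simp add: power2_eq_square algebra_simps)
  finally have "0 < penalized_pairing M V lam t (\<lambda>v. \<alpha> * t v)" using \<alpha> c by simp
  then show ?thesis
    using SUP_upper[OF \<alpha>t, of "\<lambda>s. ereal (penalized_pairing M V lam t s)"]
    by (metis ereal_less(2) less_le_trans)
qed

lemma argmin_on_eq_zero_level:
  fixes J :: "'t \<Rightarrow> ereal"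
  assumes "T0 \<subseteq> T" and "T0 \<noteq> {}"
    and J: "\<And>t. t \<in> T \<Longrightarrow> if t \<in> T0 then J t = 0 else 0 < J t"
  shows "T0 = argmin_on T J"
proof -
  obtain t0 where "t0 \<in> T0" using assms(2) by auto
  have "0 \<le> J t" if "t \<in> T" for t using J[OF that] by (auto split: if_splits)
  then show ?thesis
    using assms \<open>t0 \<in> T0\<close> J[of t0] unfolding argmin_on_def
    by (auto split: if_splits) (metis not_less subsetD)
qed

lemma argmin_on_eq_by_critic:
  fixes J :: "'t \<Rightarrow> ('b \<Rightarrow> real) \<Rightarrow> real"
  assumes V: "V \<in> measurable M N" and S: "S \<subseteq> L2 M V N"
    and lam: "0 < lam" and shape: "star_shaped S \<or> lam < 1"
    and T0: "T0 \<subseteq> T" "T0 \<noteq> {}"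
    and critic: "\<And>t. t \<in> T \<Longrightarrow> \<exists>c\<in>S. (\<forall>s\<in>S. J t s = penalized_pairing M V lam c s) \<and>
                                   (t \<in> T0 \<longleftrightarrow> (AE \<omega> in M. c (V \<omega>) = 0))"
  shows "T0 = argmin_on T (\<lambda>t. SUP s\<in>S. ereal (J t s))"
proof (rule argmin_on_eq_zero_level[OF T0])
  fix t assume "t \<in> T"
  then obtain c where c: "c \<in> S" and J: "\<And>s. s \<in> S \<Longrightarrow> J t s = penalized_pairing M V lam c s"
    and T0_iff: "t \<in> T0 \<longleftrightarrow> (AE \<omega> in M. c (V \<omega>) = 0)"
    using critic by blast
  have "(SUP s\<in>S. ereal (J t s)) = (SUP s\<in>S. ereal (penalized_pairing M V lam c s))"
    by (rule SUP_cong) (simp_all add: J)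
  then show "if t \<in> T0 then (SUP s\<in>S. ereal (J t s)) = 0 else 0 < (SUP s\<in>S. ereal (J t s))"
    using SUP_penalized_pairing_eq_0[OF S V c] SUP_penalized_pairing_pos[OF S V c lam shape]
      lam T0_iff by auto
qed

section \<open>Conditional densities as disintegration kernels\<close>

text \<open>The rectangle form of a conditional density: the law of (V, A) has density f(a|v) with
  respect to law(V) \<otimes> mu.  Unlike the pointwise cond_density, it survives refining V by a
  variable W that is conditionally independent of A given V.\<close>

definition cond_density_kernel ::
  "'o measure \<Rightarrow> ('o \<Rightarrow> 'a) \<Rightarrow> 'a measure \<Rightarrow> ('o \<Rightarrow> 'v) \<Rightarrow> 'v measure
     \<Rightarrow> ('a \<Rightarrow> 'v \<Rightarrow> real) \<Rightarrow> bool" where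
  "cond_density_kernel M A mu V MV f \<longleftrightarrow>
     (\<lambda>p. f (fst p) (snd p)) \<in> borel_measurable (mu \<Otimes>\<^sub>M MV) \<and> (\<forall>a v. 0 \<le> f a v) \<and>
     (\<forall>C\<in>sets MV. \<forall>B\<in>sets mu.
        (\<integral>\<^sup>+\<omega>. indicator C (V \<omega>) * indicator B (A \<omega>) \<partial>M) =
        (\<integral>\<^sup>+\<omega>. indicator C (V \<omega>) * (\<integral>\<^sup>+a. ennreal (f a (V \<omega>)) * indicator B a \<partial>mu) \<partial>M))"

lemma cond_density_kernel_measurable:
  assumes "cond_density_kernel M A mu V MV f"
  shows "(\<lambda>p. f (snd p) (fst p)) \<in> borel_measurable (MV \<Otimes>\<^sub>M mu)"
    and "(\<lambda>p. f (snd p) (fst p)) \<in> borel_measurable (distr M MV V \<Otimes>\<^sub>M mu)"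
    and "v \<in> space MV \<Longrightarrow> (\<lambda>a. f a v) \<in> borel_measurable mu"
proof -
  have fm: "(\<lambda>p. f (fst p) (snd p)) \<in> borel_measurable (mu \<Otimes>\<^sub>M MV)"
    using assms unfolding cond_density_kernel_def by blast
  show fm': "(\<lambda>p. f (snd p) (fst p)) \<in> borel_measurable (MV \<Otimes>\<^sub>M mu)"
    using measurable_compose[OF measurable_Pair[OF measurable_snd measurable_fst] fm] by simp
  have "sets (distr M MV V \<Otimes>\<^sub>M mu) = sets (MV \<Otimes>\<^sub>M mu)" by (rule sets_pair_measure_cong) simp_all
  from measurable_cong_sets[OF this refl, of borel] fm'
  show "(\<lambda>p. f (snd p) (fst p)) \<in> borel_measurable (distr M MV V \<Otimes>\<^sub>M mu)" by simp
  show "(\<lambda>a. f a v) \<in> borel_measurable mu" if "v \<in> space MV"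
    using measurable_compose[OF measurable_Pair2'[OF that] fm] by simp
qed

lemma emeasure_density_pair_rectangle:
  fixes g :: "'v \<times> 'a \<Rightarrow> ennreal"
  assumes "sigma_finite_measure mu" and [measurable]: "g \<in> borel_measurable (N \<Otimes>\<^sub>M mu)"
    and [measurable]: "C \<in> sets N" "B \<in> sets mu"
  shows "emeasure (density (N \<Otimes>\<^sub>M mu) g) (C \<times> B)
         = (\<integral>\<^sup>+v. indicator C v * (\<integral>\<^sup>+a. g (v, a) * indicator B a \<partial>mu) \<partial>N)"
proof -
  interpret mu: sigma_finite_measure mu by fact
  have "emeasure (density (N \<Otimes>\<^sub>M mu) g) (C \<times> B) = (\<integral>\<^sup>+p. g p * indicator (C \<times> B) p \<partial>(N \<Otimes>\<^sub>M mu))"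
    by (rule emeasure_density) measurable
  also have "\<dots> = (\<integral>\<^sup>+v. (\<integral>\<^sup>+a. g (v, a) * indicator (C \<times> B) (v, a) \<partial>mu) \<partial>N)"
    by (rule mu.nn_integral_fst[symmetric]) measurable
  also have "\<dots> = (\<integral>\<^sup>+v. indicator C v * (\<integral>\<^sup>+a. g (v, a) * indicator B a \<partial>mu) \<partial>N)"
  proof (rule nn_integral_cong)
    fix v assume "v \<in> space N"
    then have [measurable]: "(\<lambda>a. g (v, a)) \<in> borel_measurable mu"
      using measurable_compose[OF measurable_Pair1' assms(2)] by simp
    have "(\<integral>\<^sup>+a. g (v, a) * indicator (C \<times> B) (v, a) \<partial>mu) = (\<integral>\<^sup>+a. indicator C v * (g (v, a) * indicator B a) \<partial>mu)"
      by (rule nn_integral_cong) (auto split: split_indicator)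
    also have "\<dots> = indicator C v * (\<integral>\<^sup>+a. g (v, a) * indicator B a \<partial>mu)"
      by (rule nn_integral_cmult) measurable
    finally show "(\<integral>\<^sup>+a. g (v, a) * indicator (C \<times> B) (v, a) \<partial>mu)
        = indicator C v * (\<integral>\<^sup>+a. g (v, a) * indicator B a \<partial>mu)" .
  qed
  finally show ?thesis .
qed

lemma distr_pair_eq_density_cond_density_kernel:
  fixes f :: "'a \<Rightarrow> 'v \<Rightarrow> real"
  assumes "prob_space M" and "sigma_finite_measure mu"
    and [measurable]: "V \<in> measurable M MV" "A \<in> measurable M mu"
    and K: "cond_density_kernel M A mu V MV f"
  shows "distr M (MV \<Otimes>\<^sub>M mu) (\<lambda>\<omega>. (V \<omega>, A \<omega>)) =
         density (distr M MV V \<Otimes>\<^sub>M mu) (\<lambda>p. ennreal (f (snd p) (fst p)))"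
proof -
  interpret prob_space M by fact
  interpret mu: sigma_finite_measure mu by fact
  note [measurable] = cond_density_kernel_measurable(1,2)[OF K]
  let ?E = "{C \<times> B | C B. C \<in> sets MV \<and> B \<in> sets mu}"
  let ?\<Omega> = "space MV \<times> space mu"
  show ?thesis
  proof (rule measure_eqI_generator_eq[where E = ?E and \<Omega> = ?\<Omega> and A = "\<lambda>_. ?\<Omega>"])
    show "Int_stable ?E" by (rule Int_stable_pair_measure_generator)
    show "?E \<subseteq> Pow ?\<Omega>" by (auto dest: sets.sets_into_space)
    show "sets (distr M (MV \<Otimes>\<^sub>M mu) (\<lambda>\<omega>. (V \<omega>, A \<omega>))) = sigma_sets ?\<Omega> ?E"
      by (simp add: sets_pair_measure)
    show "sets (density (distr M MV V \<Otimes>\<^sub>M mu) (\<lambda>p. ennreal (f (snd p) (fst p)))) = sigma_sets ?\<Omega> ?E"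
      by (simp add: sets_pair_measure)
    show "range (\<lambda>_. ?\<Omega>) \<subseteq> ?E" by auto
    show "(\<Union>i. ?\<Omega>) = ?\<Omega>" by simp
    have "?\<Omega> \<in> sets (MV \<Otimes>\<^sub>M mu)" by (metis space_pair_measure sets.top)
    then show "emeasure (distr M (MV \<Otimes>\<^sub>M mu) (\<lambda>\<omega>. (V \<omega>, A \<omega>))) ?\<Omega> \<noteq> \<infinity>" for i :: nat
      by (simp add: emeasure_distr)
    fix X assume "X \<in> ?E"
    then obtain C B where CB[measurable]: "C \<in> sets MV" "B \<in> sets mu" and X: "X = C \<times> B" by auto
    have [measurable]: "X \<in> sets (MV \<Otimes>\<^sub>M mu)" unfolding X by measurable
    have "emeasure (distr M (MV \<Otimes>\<^sub>M mu) (\<lambda>\<omega>. (V \<omega>, A \<omega>))) X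
        = emeasure M ((\<lambda>\<omega>. (V \<omega>, A \<omega>)) -` X \<inter> space M)"
      by (intro emeasure_distr) auto
    also have "\<dots> = (\<integral>\<^sup>+\<omega>. indicator ((\<lambda>\<omega>. (V \<omega>, A \<omega>)) -` X \<inter> space M) \<omega> \<partial>M)"
      by (intro nn_integral_indicator[symmetric]) measurable
    also have "\<dots> = (\<integral>\<^sup>+\<omega>. indicator C (V \<omega>) * indicator B (A \<omega>) \<partial>M)"
      by (rule nn_integral_cong) (auto simp: X split: split_indicator)
    also have "\<dots> = (\<integral>\<^sup>+\<omega>. indicator C (V \<omega>) * (\<integral>\<^sup>+a. ennreal (f a (V \<omega>)) * indicator B a \<partial>mu) \<partial>M)"
      using K CB unfolding cond_density_kernel_def by blast
    also have "\<dots> = (\<integral>\<^sup>+v. indicator C v * (\<integral>\<^sup>+a. ennreal (f a v) * indicator B a \<partial>mu) \<partial>distr M MV V)"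
      by (rule nn_integral_distr[symmetric]) measurable
    also have "\<dots> = emeasure (density (distr M MV V \<Otimes>\<^sub>M mu) (\<lambda>p. ennreal (f (snd p) (fst p)))) X"
      using emeasure_density_pair_rectangle[of mu "\<lambda>p. ennreal (f (snd p) (fst p))" "distr M MV V" C B]
        mu.sigma_finite_measure_axioms by (simp add: X)
    finally show "emeasure (distr M (MV \<Otimes>\<^sub>M mu) (\<lambda>\<omega>. (V \<omega>, A \<omega>))) X =
      emeasure (density (distr M MV V \<Otimes>\<^sub>M mu) (\<lambda>p. ennreal (f (snd p) (fst p)))) X" .
  qed
qed

lemma nn_integral_cond_density_kernel:
  fixes f :: "'a \<Rightarrow> 'v \<Rightarrow> real"
  assumes "prob_space M" and "sigma_finite_measure mu"
    and [measurable]: "V \<in> measurable M MV" "A \<in> measurable M mu"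
    and K: "cond_density_kernel M A mu V MV f"
    and [measurable]: "G \<in> borel_measurable (MV \<Otimes>\<^sub>M mu)"
  shows "(\<integral>\<^sup>+\<omega>. G (V \<omega>, A \<omega>) \<partial>M) = (\<integral>\<^sup>+\<omega>. (\<integral>\<^sup>+a. ennreal (f a (V \<omega>)) * G (V \<omega>, a) \<partial>mu) \<partial>M)"
proof -
  interpret prob_space M by fact
  interpret mu: sigma_finite_measure mu by fact
  note [measurable] = cond_density_kernel_measurable(2)[OF K]
  have "sets (distr M MV V \<Otimes>\<^sub>M mu) = sets (MV \<Otimes>\<^sub>M mu)" by (rule sets_pair_measure_cong) simp_all
  then have [measurable]: "G \<in> borel_measurable (distr M MV V \<Otimes>\<^sub>M mu)"
    using measurable_cong_sets[of _ _ borel borel] by auto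
  have [measurable]: "(\<lambda>v. \<integral>\<^sup>+a. ennreal (f a v) * G (v, a) \<partial>mu) \<in> borel_measurable (distr M MV V)"
    using mu.borel_measurable_nn_integral_fst[of "\<lambda>p. ennreal (f (snd p) (fst p)) * G p" "distr M MV V"]
    by simp
  have "(\<integral>\<^sup>+\<omega>. G (V \<omega>, A \<omega>) \<partial>M) = (\<integral>\<^sup>+p. G p \<partial>distr M (MV \<Otimes>\<^sub>M mu) (\<lambda>\<omega>. (V \<omega>, A \<omega>)))"
    by (rule nn_integral_distr[symmetric]) measurable
  also have "\<dots> = (\<integral>\<^sup>+p. ennreal (f (snd p) (fst p)) * G p \<partial>(distr M MV V \<Otimes>\<^sub>M mu))"
    unfolding distr_pair_eq_density_cond_density_kernel[OF assms(1-5)]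
    by (rule nn_integral_density) measurable
  also have "\<dots> = (\<integral>\<^sup>+v. (\<integral>\<^sup>+a. ennreal (f a v) * G (v, a) \<partial>mu) \<partial>distr M MV V)"
    by (subst mu.nn_integral_fst[symmetric]) simp_all
  also have "\<dots> = (\<integral>\<^sup>+\<omega>. (\<integral>\<^sup>+a. ennreal (f a (V \<omega>)) * G (V \<omega>, a) \<partial>mu) \<partial>M)"
    by (rule nn_integral_distr) measurable
  finally show ?thesis .
qed

lemma integral_cond_density_kernel:
  fixes f :: "'a \<Rightarrow> 'v \<Rightarrow> real" and G :: "'v \<times> 'a \<Rightarrow> real"
  assumes "prob_space M" and "sigma_finite_measure mu"
    and [measurable]: "V \<in> measurable M MV" "A \<in> measurable M mu"
    and K: "cond_density_kernel M A mu V MV f"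
    and [measurable]: "G \<in> borel_measurable (MV \<Otimes>\<^sub>M mu)"
    and G_int: "integrable M (\<lambda>\<omega>. G (V \<omega>, A \<omega>))"
  shows "integrable M (\<lambda>\<omega>. \<integral>a. f a (V \<omega>) * G (V \<omega>, a) \<partial>mu)"
    and "(\<integral>\<omega>. G (V \<omega>, A \<omega>) \<partial>M) = (\<integral>\<omega>. (\<integral>a. f a (V \<omega>) * G (V \<omega>, a) \<partial>mu) \<partial>M)"
proof -
  interpret prob_space M by fact
  interpret mu: sigma_finite_measure mu by fact
  interpret P: prob_space "distr M MV V" by (rule prob_space_distr) fact
  interpret PP: pair_sigma_finite "distr M MV V" mu
    by (simp add: pair_sigma_finite_def P.sigma_finite_measure_axioms mu.sigma_finite_measure_axioms)
  note [measurable] = cond_density_kernel_measurable(2)[OF K]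
  have f_nonneg: "0 \<le> f a v" for a v using K unfolding cond_density_kernel_def by blast
  have "sets (distr M MV V \<Otimes>\<^sub>M mu) = sets (MV \<Otimes>\<^sub>M mu)" by (rule sets_pair_measure_cong) simp_all
  then have [measurable]: "G \<in> borel_measurable (distr M MV V \<Otimes>\<^sub>M mu)"
    using measurable_cong_sets[of _ _ borel borel] by auto
  note joint = distr_pair_eq_density_cond_density_kernel[OF assms(1-5)]
  have "integrable (distr M (MV \<Otimes>\<^sub>M mu) (\<lambda>\<omega>. (V \<omega>, A \<omega>))) G"
    using G_int by (subst integrable_distr_eq) measurable
  then have fG_int: "integrable (distr M MV V \<Otimes>\<^sub>M mu) (\<lambda>p. f (snd p) (fst p) *\<^sub>R G p)"
    unfolding joint by (subst (asm) integrable_density) (auto simp: f_nonneg)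
  have inner_int: "integrable (distr M MV V) (\<lambda>v. \<integral>a. f a v * G (v, a) \<partial>mu)"
    using PP.integrable_fst'[OF fG_int] by simp
  then show "integrable M (\<lambda>\<omega>. \<integral>a. f a (V \<omega>) * G (V \<omega>, a) \<partial>mu)"
    using integrable_distr[OF assms(3) inner_int] by simp
  have "(\<integral>\<omega>. G (V \<omega>, A \<omega>) \<partial>M) = (\<integral>p. G p \<partial>distr M (MV \<Otimes>\<^sub>M mu) (\<lambda>\<omega>. (V \<omega>, A \<omega>)))"
    by (rule integral_distr[symmetric]) measurable
  also have "\<dots> = (\<integral>p. f (snd p) (fst p) *\<^sub>R G p \<partial>(distr M MV V \<Otimes>\<^sub>M mu))"
    unfolding joint by (rule integral_density) (auto simp: f_nonneg)
  also have "\<dots> = (\<integral>v. (\<integral>a. f a v * G (v, a) \<partial>mu) \<partial>distr M MV V)"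
    using PP.integral_fst'[OF fG_int] by simp
  also have "\<dots> = (\<integral>\<omega>. (\<integral>a. f a (V \<omega>) * G (V \<omega>, a) \<partial>mu) \<partial>M)"
    using borel_measurable_integrable[OF inner_int] by (subst integral_distr) auto
  finally show "(\<integral>\<omega>. G (V \<omega>, A \<omega>) \<partial>M) = (\<integral>\<omega>. (\<integral>a. f a (V \<omega>) * G (V \<omega>, a) \<partial>mu) \<partial>M)" .
qed

lemma AE_cond_density_kernel_eq_0:
  fixes f :: "'a \<Rightarrow> 'v \<Rightarrow> real" and G :: "'v \<times> 'a \<Rightarrow> ennreal"
  assumes "prob_space M" and "sigma_finite_measure mu"
    and [measurable]: "V \<in> measurable M MV" "A \<in> measurable M mu"
    and K: "cond_density_kernel M A mu V MV f"
    and [measurable]: "G \<in> borel_measurable (MV \<Otimes>\<^sub>M mu)"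
    and G0: "(\<integral>\<^sup>+\<omega>. G (V \<omega>, A \<omega>) \<partial>M) = 0"
  shows "AE \<omega> in M. AE a in mu. f a (V \<omega>) = 0 \<or> G (V \<omega>, a) = 0"
proof -
  interpret mu: sigma_finite_measure mu by fact
  have f_nonneg: "0 \<le> f a v" for a v using K unfolding cond_density_kernel_def by blast
  have "(\<lambda>p. (V (fst p), snd p)) \<in> measurable (M \<Otimes>\<^sub>M mu) (MV \<Otimes>\<^sub>M mu)" by measurable
  from measurable_compose[OF this cond_density_kernel_measurable(1)[OF K]]
  have [measurable]: "(\<lambda>p. f (snd p) (V (fst p))) \<in> borel_measurable (M \<Otimes>\<^sub>M mu)" by simp
  have [measurable]: "(\<lambda>a. f a (V \<omega>)) \<in> borel_measurable mu"
    and [measurable]: "(\<lambda>a. G (V \<omega>, a)) \<in> borel_measurable mu" if "\<omega> \<in> space M" for \<omega>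
    using that measurable_space[OF assms(3)]
    by (auto intro: cond_density_kernel_measurable(3)[OF K] measurable_compose[OF measurable_Pair1'])
  have "(\<lambda>p. ennreal (f (snd p) (V (fst p))) * G (V (fst p), snd p)) \<in> borel_measurable (M \<Otimes>\<^sub>M mu)"
    by measurable
  from mu.borel_measurable_nn_integral_fst[OF this]
  have "(\<lambda>\<omega>. \<integral>\<^sup>+a. ennreal (f a (V \<omega>)) * G (V \<omega>, a) \<partial>mu) \<in> borel_measurable M" by simp
  moreover have "(\<integral>\<^sup>+\<omega>. (\<integral>\<^sup>+a. ennreal (f a (V \<omega>)) * G (V \<omega>, a) \<partial>mu) \<partial>M) = 0"
    using G0 nn_integral_cond_density_kernel[OF assms(1-6)] by simp
  ultimately have "AE \<omega> in M. (\<integral>\<^sup>+a. ennreal (f a (V \<omega>)) * G (V \<omega>, a) \<partial>mu) = 0"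
    by (simp add: nn_integral_0_iff_AE)
  then show ?thesis
  proof (rule AE_mp[OF _ AE_I2], intro impI)
    fix \<omega> assume "\<omega> \<in> space M" and "(\<integral>\<^sup>+a. ennreal (f a (V \<omega>)) * G (V \<omega>, a) \<partial>mu) = 0"
    then have "AE a in mu. ennreal (f a (V \<omega>)) * G (V \<omega>, a) = 0"
      by (subst (asm) nn_integral_0_iff_AE) measurable
    then show "AE a in mu. f a (V \<omega>) = 0 \<or> G (V \<omega>, a) = 0"
      by eventually_elim (use f_nonneg in auto)
  qed
qed

lemma nn_integral_mult_cond_density:
  fixes f :: "'a \<Rightarrow> 'v \<Rightarrow> real" and k :: "'o \<Rightarrow> real"
  assumes "prob_space M" and V[measurable]: "V \<in> measurable M MV" and [measurable]: "A \<in> measurable M mu"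
    and cd: "cond_density M A mu V MV f" and B[measurable]: "B \<in> sets mu"
    and [measurable]: "k \<in> borel_measurable M" and k01: "\<And>\<omega>. 0 \<le> k \<omega> \<and> k \<omega> \<le> 1"
    and eq: "(\<integral>\<omega>. k \<omega> * indicator B (A \<omega>) \<partial>M)
           = (\<integral>\<omega>. k \<omega> * cexp M V MV (\<lambda>\<omega>. indicator B (A \<omega>)) \<omega> \<partial>M)"
  shows "(\<integral>\<^sup>+\<omega>. ennreal (k \<omega>) * indicator B (A \<omega>) \<partial>M) =
         (\<integral>\<^sup>+\<omega>. ennreal (k \<omega>) * (\<integral>\<^sup>+a. ennreal (f a (V \<omega>)) * indicator B a \<partial>mu) \<partial>M)"
proof -
  interpret prob_space M by fact
  interpret sfs: sigma_finite_subalgebra M "sig M V MV" by (rule sigma_finite_subalgebra_sig) fact+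
  define c where "c = cexp M V MV (\<lambda>\<omega>. indicator B (A \<omega>))"
  have "integrable M (\<lambda>\<omega>. indicator B (A \<omega>) :: real)"
    by (rule integrable_const_bound[where B=1]) (auto simp: indicator_def)
  then have c_int: "integrable M c" unfolding c_def cexp_def by (rule sfs.real_cond_exp_int(1))
  then have [measurable]: "c \<in> borel_measurable M" by auto
  have c_nonneg: "AE \<omega> in M. 0 \<le> c \<omega>"
    unfolding c_def cexp_def by (rule sfs.real_cond_exp_pos) auto
  have c_density: "AE \<omega> in M. ennreal (c \<omega>) = (\<integral>\<^sup>+a. ennreal (f a (V \<omega>)) * indicator B a \<partial>mu)"
    using cd B unfolding cond_density_def c_def by blast
  have kB_int: "integrable M (\<lambda>\<omega>. k \<omega> * indicator B (A \<omega>))"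
    by (rule integrable_const_bound[where B=1]) (auto simp: k01 abs_le_iff indicator_def)
  have kc_int: "integrable M (\<lambda>\<omega>. k \<omega> * c \<omega>)"
    by (rule Bochner_Integration.integrable_bound[OF c_int])
       (use k01 in \<open>auto simp: abs_mult intro!: mult_left_le_one_le\<close>)
  have "(\<integral>\<^sup>+\<omega>. ennreal (k \<omega>) * indicator B (A \<omega>) \<partial>M) = (\<integral>\<^sup>+\<omega>. ennreal (k \<omega> * indicator B (A \<omega>)) \<partial>M)"
    by (rule nn_integral_cong) (auto simp: k01 ennreal_mult ennreal_indicator)
  also have "\<dots> = ennreal (\<integral>\<omega>. k \<omega> * indicator B (A \<omega>) \<partial>M)"
    by (rule nn_integral_eq_integral[OF kB_int]) (auto simp: k01)
  also have "\<dots> = ennreal (\<integral>\<omega>. k \<omega> * c \<omega> \<partial>M)" by (simp add: eq c_def)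
  also have "\<dots> = (\<integral>\<^sup>+\<omega>. ennreal (k \<omega> * c \<omega>) \<partial>M)"
    by (rule nn_integral_eq_integral[OF kc_int, symmetric]) (use c_nonneg k01 in auto)
  also have "\<dots> = (\<integral>\<^sup>+\<omega>. ennreal (k \<omega>) * (\<integral>\<^sup>+a. ennreal (f a (V \<omega>)) * indicator B a \<partial>mu) \<partial>M)"
    by (rule nn_integral_cong_AE) (use c_nonneg c_density k01 in \<open>auto simp: ennreal_mult\<close>)
  finally show ?thesis .
qed

lemma cond_density_kernel_of_cond_density:
  fixes f :: "'a \<Rightarrow> 'v \<Rightarrow> real"
  assumes "prob_space M" and V[measurable]: "V \<in> measurable M MV" and [measurable]: "A \<in> measurable M mu"
    and cd: "cond_density M A mu V MV f"
  shows "cond_density_kernel M A mu V MV f"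
  unfolding cond_density_kernel_def
proof (intro conjI ballI)
  show "(\<lambda>p. f (fst p) (snd p)) \<in> borel_measurable (mu \<Otimes>\<^sub>M MV)" "\<forall>a v. 0 \<le> f a v"
    using cd unfolding cond_density_def by auto
  fix C B assume [measurable]: "C \<in> sets MV" "B \<in> sets mu"
  interpret prob_space M by fact
  interpret sfs: sigma_finite_subalgebra M "sig M V MV" by (rule sigma_finite_subalgebra_sig) fact+
  have C_sig: "(\<lambda>\<omega>. indicator C (V \<omega>) :: real) \<in> borel_measurable (sig M V MV)"
    by (rule measurable_sig_comp[OF _ V]) measurable
  have "(\<integral>\<omega>. indicator C (V \<omega>) * indicator B (A \<omega>) \<partial>M)
      = (\<integral>\<omega>. indicator C (V \<omega>) * cexp M V MV (\<lambda>\<omega>. indicator B (A \<omega>)) \<omega> \<partial>M)"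
    unfolding cexp_def
  proof (rule sfs.real_cond_exp_intg(2)[symmetric, OF _ C_sig])
    show "integrable M (\<lambda>\<omega>. indicator C (V \<omega>) * indicator B (A \<omega>) :: real)"
      by (rule integrable_const_bound[where B=1]) (auto simp: indicator_def)
  qed measurable
  from nn_integral_mult_cond_density[OF assms(1-4) \<open>B \<in> sets mu\<close> _ _ this]
  show "(\<integral>\<^sup>+\<omega>. indicator C (V \<omega>) * indicator B (A \<omega>) \<partial>M) =
        (\<integral>\<^sup>+\<omega>. indicator C (V \<omega>) * (\<integral>\<^sup>+a. ennreal (f a (V \<omega>)) * indicator B a \<partial>mu) \<partial>M)"
    by (simp add: ennreal_indicator)
qed

lemma cexp_indicator_mult_cond_indep:
  fixes T' :: "'o \<Rightarrow> real"
  assumes "prob_space M" and [measurable]: "V \<in> measurable M MV"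
    and [measurable]: "A \<in> measurable M mu" "W \<in> measurable M MW" "T' \<in> borel_measurable M"
    and Z[measurable]: "Z \<in> measurable M MZ"
    and ci: "cond_indep M (\<lambda>\<omega>. (Z \<omega>, A \<omega>)) (MZ \<Otimes>\<^sub>M mu) (\<lambda>\<omega>. (T' \<omega>, W \<omega>)) (borel \<Otimes>\<^sub>M MW) V MV"
    and [measurable]: "B \<in> sets mu" "D \<in> sets MW"
  shows "AE \<omega> in M. cexp M V MV (\<lambda>\<omega>. indicator B (A \<omega>) * indicator D (W \<omega>)) \<omega>
           = cexp M V MV (\<lambda>\<omega>. indicator B (A \<omega>)) \<omega> * cexp M V MV (\<lambda>\<omega>. indicator D (W \<omega>)) \<omega>"
proof -
  interpret sfs: sigma_finite_subalgebra M "sig M V MV" by (rule sigma_finite_subalgebra_sig) fact+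
  have "space MZ \<times> B \<in> sets (MZ \<Otimes>\<^sub>M mu)" "UNIV \<times> D \<in> sets (borel \<Otimes>\<^sub>M MW)" by auto
  with ci have "AE \<omega> in M.
      cexp M V MV (\<lambda>\<omega>. indicator (space MZ \<times> B) (Z \<omega>, A \<omega>) * indicator (UNIV \<times> D) (T' \<omega>, W \<omega>)) \<omega>
      = cexp M V MV (\<lambda>\<omega>. indicator (space MZ \<times> B) (Z \<omega>, A \<omega>)) \<omega>
        * cexp M V MV (\<lambda>\<omega>. indicator (UNIV \<times> D) (T' \<omega>, W \<omega>)) \<omega>"
    unfolding cond_indep_def by blast
  moreover have "AE \<omega> in M.
      cexp M V MV (\<lambda>\<omega>. indicator (space MZ \<times> B) (Z \<omega>, A \<omega>) * indicator (UNIV \<times> D) (T' \<omega>, W \<omega>)) \<omega>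
      = cexp M V MV (\<lambda>\<omega>. indicator B (A \<omega>) * indicator D (W \<omega>)) \<omega>"
    unfolding cexp_def
    by (rule sfs.real_cond_exp_cong) (auto simp: measurable_space[OF Z] split: split_indicator)
  moreover have "AE \<omega> in M. cexp M V MV (\<lambda>\<omega>. indicator (space MZ \<times> B) (Z \<omega>, A \<omega>)) \<omega>
      = cexp M V MV (\<lambda>\<omega>. indicator B (A \<omega>)) \<omega>"
    unfolding cexp_def
    by (rule sfs.real_cond_exp_cong) (auto simp: measurable_space[OF Z] split: split_indicator)
  moreover have "(\<lambda>\<omega>. indicator (UNIV \<times> D) (T' \<omega>, W \<omega>) :: real) = (\<lambda>\<omega>. indicator D (W \<omega>))"
    by (auto split: split_indicator)
  ultimately show ?thesis by (auto elim: AE_mp)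
qed

lemma integral_rectangle_cond_indep:
  fixes T' :: "'o \<Rightarrow> real"
  assumes "prob_space M" and V[measurable]: "V \<in> measurable M MV"
    and [measurable]: "A \<in> measurable M mu" "W \<in> measurable M MW" "T' \<in> borel_measurable M"
      "Z \<in> measurable M MZ"
    and ci: "cond_indep M (\<lambda>\<omega>. (Z \<omega>, A \<omega>)) (MZ \<Otimes>\<^sub>M mu) (\<lambda>\<omega>. (T' \<omega>, W \<omega>)) (borel \<Otimes>\<^sub>M MW) V MV"
    and [measurable]: "C \<in> sets MV" "D \<in> sets MW" "B \<in> sets mu"
  shows "(\<integral>\<omega>. (indicator C (V \<omega>) * indicator D (W \<omega>)) * indicator B (A \<omega>) \<partial>M)
       = (\<integral>\<omega>. (indicator C (V \<omega>) * indicator D (W \<omega>)) * cexp M V MV (\<lambda>\<omega>. indicator B (A \<omega>)) \<omega> \<partial>M)"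
proof -
  interpret prob_space M by fact
  interpret sfs: sigma_finite_subalgebra M "sig M V MV" by (rule sigma_finite_subalgebra_sig) fact+
  define c where "c = cexp M V MV (\<lambda>\<omega>. indicator B (A \<omega>))"
  have C_sig: "(\<lambda>\<omega>. indicator C (V \<omega>) :: real) \<in> borel_measurable (sig M V MV)"
    by (rule measurable_sig_comp[OF _ V]) measurable
  have "integrable M (\<lambda>\<omega>. indicator B (A \<omega>) :: real)"
    by (rule integrable_const_bound[where B=1]) (auto simp: indicator_def)
  then have c_int: "integrable M c" unfolding c_def cexp_def by (rule sfs.real_cond_exp_int(1))
  have c_sig: "c \<in> borel_measurable (sig M V MV)"
    unfolding c_def cexp_def by (rule borel_measurable_cond_exp)
  have [measurable]: "c \<in> borel_measurable M" using c_int by auto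
  \<comment> \<open>condition on V twice: first on the product, then, by conditional independence,
    on the D factor\<close>
  have "(\<integral>\<omega>. (indicator C (V \<omega>) * indicator D (W \<omega>)) * (indicator B (A \<omega>) :: real) \<partial>M)
      = (\<integral>\<omega>. indicator C (V \<omega>) * (indicator B (A \<omega>) * indicator D (W \<omega>)) \<partial>M)"
    by (rule Bochner_Integration.integral_cong) (auto simp: ac_simps)
  also have "\<dots> = (\<integral>\<omega>. indicator C (V \<omega>) * cexp M V MV (\<lambda>\<omega>. indicator B (A \<omega>) * indicator D (W \<omega>)) \<omega> \<partial>M)"
    unfolding cexp_def
  proof (rule sfs.real_cond_exp_intg(2)[symmetric, OF _ C_sig])
    show "integrable M (\<lambda>x. indicator C (V x) * (indicator B (A x) * indicator D (W x)) :: real)"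
      by (rule integrable_const_bound[where B=1]) (auto simp: indicator_def)
  qed measurable
  also have "\<dots> = (\<integral>\<omega>. (indicator C (V \<omega>) * c \<omega>) * cexp M V MV (\<lambda>\<omega>. indicator D (W \<omega>)) \<omega> \<partial>M)"
    by (rule integral_cong_AE)
       (use cexp_indicator_mult_cond_indep[OF assms(1-7), of B D] in \<open>auto simp: c_def cexp_def\<close>)
  also have "\<dots> = (\<integral>\<omega>. (indicator C (V \<omega>) * c \<omega>) * indicator D (W \<omega>) \<partial>M)"
    unfolding cexp_def
  proof (rule sfs.real_cond_exp_intg(2))
    show "integrable M (\<lambda>x. indicator C (V x) * c x * indicator D (W x))"
      by (rule Bochner_Integration.integrable_bound[OF c_int]) (auto simp: indicator_def)
    show "(\<lambda>x. indicator C (V x) * c x) \<in> borel_measurable (sig M V MV)"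
      using C_sig c_sig by measurable
  qed measurable
  finally show ?thesis by (simp add: ac_simps c_def)
qed

lemma nn_integral_rectangle_cond_indep:
  fixes f :: "'a \<Rightarrow> 'v \<Rightarrow> real" and T' :: "'o \<Rightarrow> real"
  assumes "prob_space M" and [measurable]: "V \<in> measurable M MV"
    and [measurable]: "A \<in> measurable M mu" "W \<in> measurable M MW" "T' \<in> borel_measurable M"
      "Z \<in> measurable M MZ"
    and cd: "cond_density M A mu V MV f"
    and ci: "cond_indep M (\<lambda>\<omega>. (Z \<omega>, A \<omega>)) (MZ \<Otimes>\<^sub>M mu) (\<lambda>\<omega>. (T' \<omega>, W \<omega>)) (borel \<Otimes>\<^sub>M MW) V MV"
    and C[measurable]: "C \<in> sets MV" and D[measurable]: "D \<in> sets MW" and B[measurable]: "B \<in> sets mu"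
  shows "(\<integral>\<^sup>+\<omega>. indicator (C \<times> D) (V \<omega>, W \<omega>) * indicator B (A \<omega>) \<partial>M) =
      (\<integral>\<^sup>+\<omega>. indicator (C \<times> D) (V \<omega>, W \<omega>) * (\<integral>\<^sup>+a. ennreal (f a (V \<omega>)) * indicator B a \<partial>mu) \<partial>M)"
proof -
  have "indicator (C \<times> D) (V \<omega>, W \<omega>) = ennreal (indicator C (V \<omega>) * indicator D (W \<omega>))" for \<omega>
    by (auto split: split_indicator)
  moreover have "(\<integral>\<^sup>+\<omega>. ennreal (indicator C (V \<omega>) * indicator D (W \<omega>)) * indicator B (A \<omega>) \<partial>M)
      = (\<integral>\<^sup>+\<omega>. ennreal (indicator C (V \<omega>) * indicator D (W \<omega>))
                * (\<integral>\<^sup>+a. ennreal (f a (V \<omega>)) * indicator B a \<partial>mu) \<partial>M)"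
    by (rule nn_integral_mult_cond_density[OF assms(1-3) cd B _ _
          integral_rectangle_cond_indep[OF assms(1-6) ci C D B]])
       (measurable, simp split: split_indicator)
  ultimately show ?thesis by simp
qed

lemma nn_integral_indicator_eq_of_generator:
  fixes k1 k2 :: "'o \<Rightarrow> ennreal"
  assumes [measurable]: "V \<in> measurable M MV" "k1 \<in> borel_measurable M" "k2 \<in> borel_measurable M"
    and finite: "(\<integral>\<^sup>+\<omega>. k1 \<omega> \<partial>M) \<noteq> \<infinity>"
    and G: "Int_stable G" "G \<subseteq> Pow (space MV)" "sets MV = sigma_sets (space MV) G" "space MV \<in> G"
    and eq: "\<And>C. C \<in> G \<Longrightarrow> (\<integral>\<^sup>+\<omega>. indicator C (V \<omega>) * k1 \<omega> \<partial>M) = (\<integral>\<^sup>+\<omega>. indicator C (V \<omega>) * k2 \<omega> \<partial>M)"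
    and C: "C \<in> sets MV"
  shows "(\<integral>\<^sup>+\<omega>. indicator C (V \<omega>) * k1 \<omega> \<partial>M) = (\<integral>\<^sup>+\<omega>. indicator C (V \<omega>) * k2 \<omega> \<partial>M)"
proof -
  \<comment> \<open>both sides are the laws of V under the measures with densities k1 and k2\<close>
  have law: "emeasure (distr (density M k) MV V) C' = (\<integral>\<^sup>+\<omega>. indicator C' (V \<omega>) * k \<omega> \<partial>M)"
    if [measurable]: "k \<in> borel_measurable M" "C' \<in> sets MV" for k C'
  proof -
    have "emeasure (distr (density M k) MV V) C' = emeasure (density M k) (V -` C' \<inter> space M)"
      by (subst emeasure_distr) auto
    also have "\<dots> = (\<integral>\<^sup>+\<omega>. k \<omega> * indicator (V -` C' \<inter> space M) \<omega> \<partial>M)"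
      by (rule emeasure_density) measurable
    also have "\<dots> = (\<integral>\<^sup>+\<omega>. indicator C' (V \<omega>) * k \<omega> \<partial>M)"
      by (rule nn_integral_cong) (auto split: split_indicator)
    finally show ?thesis .
  qed
  have "distr (density M k1) MV V = distr (density M k2) MV V"
  proof (rule measure_eqI_generator_eq[where E = G and \<Omega> = "space MV" and A = "\<lambda>_. space MV"])
    show "Int_stable G" "G \<subseteq> Pow (space MV)" by (fact G)+
    show "sets (distr (density M k1) MV V) = sigma_sets (space MV) G"
      and "sets (distr (density M k2) MV V) = sigma_sets (space MV) G" using G by simp_all
    show "range (\<lambda>_. space MV) \<subseteq> G" "(\<Union>i. space MV) = space MV" using G by auto
    show "emeasure (distr (density M k1) MV V) X = emeasure (distr (density M k2) MV V) X"
      if "X \<in> G" for X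
      using law[of k1 X] law[of k2 X] eq[OF that] that G by auto
    have "emeasure (distr (density M k1) MV V) (space MV)
        = (\<integral>\<^sup>+\<omega>. indicator (space MV) (V \<omega>) * k1 \<omega> \<partial>M)"
      by (rule law) auto
    also have "\<dots> = (\<integral>\<^sup>+\<omega>. k1 \<omega> \<partial>M)"
      by (rule nn_integral_cong) (auto simp: measurable_space[OF assms(1)])
    finally have "emeasure (distr (density M k1) MV V) (space MV) = (\<integral>\<^sup>+\<omega>. k1 \<omega> \<partial>M)" .
    then show "emeasure (distr (density M k1) MV V) (space MV) \<noteq> \<infinity>" for i :: nat
      using finite by simp
  qed
  then show ?thesis using law[of k1 C] law[of k2 C] C by simp
qed

lemma cond_density_kernel_pair_of_cond_indep:
  fixes f :: "'a \<Rightarrow> 'v \<Rightarrow> real" and T' :: "'o \<Rightarrow> real"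
  assumes "prob_space M" and "sigma_finite_measure mu"
    and [measurable]: "V \<in> measurable M MV" "A \<in> measurable M mu" "W \<in> measurable M MW"
      "T' \<in> borel_measurable M" "Z \<in> measurable M MZ"
    and cd: "cond_density M A mu V MV f"
    and ci: "cond_indep M (\<lambda>\<omega>. (Z \<omega>, A \<omega>)) (MZ \<Otimes>\<^sub>M mu) (\<lambda>\<omega>. (T' \<omega>, W \<omega>)) (borel \<Otimes>\<^sub>M MW) V MV"
  shows "cond_density_kernel M A mu (\<lambda>\<omega>. (V \<omega>, W \<omega>)) (MV \<Otimes>\<^sub>M MW) (\<lambda>a p. f a (fst p))"
  unfolding cond_density_kernel_def
proof (intro conjI ballI)
  interpret prob_space M by fact
  interpret mu: sigma_finite_measure mu by fact
  have fm: "(\<lambda>p. f (fst p) (snd p)) \<in> borel_measurable (mu \<Otimes>\<^sub>M MV)"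
    using cd unfolding cond_density_def by blast
  have "(\<lambda>p. (fst p, fst (snd p))) \<in> measurable (mu \<Otimes>\<^sub>M (MV \<Otimes>\<^sub>M MW)) (mu \<Otimes>\<^sub>M MV)" by measurable
  from measurable_compose[OF this fm]
  show "(\<lambda>p. f (fst p) (fst (snd p))) \<in> borel_measurable (mu \<Otimes>\<^sub>M (MV \<Otimes>\<^sub>M MW))" by simp
  then have [measurable]: "(\<lambda>p. f (snd p) (V (fst p))) \<in> borel_measurable (M \<Otimes>\<^sub>M mu)"
    using measurable_compose[OF _ fm, of "\<lambda>p. (snd p, V (fst p))"] by simp
  show "\<forall>a p. 0 \<le> f a (fst p)" using cd unfolding cond_density_def by auto
  fix C B assume C: "C \<in> sets (MV \<Otimes>\<^sub>M MW)" and B[measurable]: "B \<in> sets mu"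
  let ?G = "{C1 \<times> D | C1 D. C1 \<in> sets MV \<and> D \<in> sets MW}"
  let ?f_B = "\<lambda>\<omega>. \<integral>\<^sup>+a. ennreal (f a (V \<omega>)) * indicator B a \<partial>mu"
  have "(\<lambda>p. ennreal (f (snd p) (V (fst p))) * indicator B (snd p)) \<in> borel_measurable (M \<Otimes>\<^sub>M mu)"
    by measurable
  from mu.borel_measurable_nn_integral_fst[OF this]
  have [measurable]: "?f_B \<in> borel_measurable M" by simp
  have "(\<integral>\<^sup>+\<omega>. indicator B (A \<omega>) \<partial>M) \<le> (\<integral>\<^sup>+\<omega>. 1 \<partial>M)"
    by (rule nn_integral_mono) (auto split: split_indicator)
  then have finite: "(\<integral>\<^sup>+\<omega>. indicator B (A \<omega>) \<partial>M) \<noteq> \<infinity>"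
    by (auto simp: emeasure_space_1 top_unique)
  have G: "Int_stable ?G" "?G \<subseteq> Pow (space (MV \<Otimes>\<^sub>M MW))"
    "sets (MV \<Otimes>\<^sub>M MW) = sigma_sets (space (MV \<Otimes>\<^sub>M MW)) ?G" "space (MV \<Otimes>\<^sub>M MW) \<in> ?G"
    by (auto simp: Int_stable_pair_measure_generator sets_pair_measure space_pair_measure
        dest: sets.sets_into_space)
  have "(\<integral>\<^sup>+\<omega>. indicator C' (V \<omega>, W \<omega>) * indicator B (A \<omega>) \<partial>M)
      = (\<integral>\<^sup>+\<omega>. indicator C' (V \<omega>, W \<omega>) * ?f_B \<omega> \<partial>M)" if "C' \<in> ?G" for C'
    using that nn_integral_rectangle_cond_indep[OF assms(1,3-9) _ _ B] by auto
  then show "(\<integral>\<^sup>+\<omega>. indicator C (V \<omega>, W \<omega>) * indicator B (A \<omega>) \<partial>M)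
      = (\<integral>\<^sup>+\<omega>. indicator C (V \<omega>, W \<omega>) * (\<integral>\<^sup>+a. ennreal (f a (fst (V \<omega>, W \<omega>))) * indicator B a \<partial>mu) \<partial>M)"
    using nn_integral_indicator_eq_of_generator[OF _ _ _ finite G _ C, of "\<lambda>\<omega>. (V \<omega>, W \<omega>)" ?f_B]
    by simp
qed

lemma AE_cond_density_nonzero_of_cond_indep:
  fixes pol :: "'a \<Rightarrow> 'x \<Rightarrow> real" and fUX :: "'a \<Rightarrow> 'u \<Rightarrow> 'x \<Rightarrow> real"
    and fWX :: "'a \<Rightarrow> 'w \<Rightarrow> 'x \<Rightarrow> real" and T' :: "'o \<Rightarrow> real"
  assumes prob: "prob_space M" and base: "sigma_finite_measure mu"
    and [measurable]: "U \<in> measurable M MU" "X \<in> measurable M MX" "A \<in> measurable M mu"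
      "Z \<in> measurable M MZ" "W \<in> measurable M MW" "T' \<in> borel_measurable M"
    and pi_meas: "(\<lambda>p. pol (fst p) (snd p)) \<in> borel_measurable (mu \<Otimes>\<^sub>M MX)"
    and densUX: "cond_density M A mu (\<lambda>\<omega>. (U \<omega>, X \<omega>)) (MU \<Otimes>\<^sub>M MX) (\<lambda>a v. fUX a (fst v) (snd v))"
    and densWX: "cond_density M A mu (\<lambda>\<omega>. (W \<omega>, X \<omega>)) (MW \<Otimes>\<^sub>M MX) (\<lambda>a v. fWX a (fst v) (snd v))"
    and ci: "cond_indep M (\<lambda>\<omega>. (Z \<omega>, A \<omega>)) (MZ \<Otimes>\<^sub>M mu) (\<lambda>\<omega>. (T' \<omega>, W \<omega>)) (borel \<Otimes>\<^sub>M MW)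
                (\<lambda>\<omega>. (U \<omega>, X \<omega>)) (MU \<Otimes>\<^sub>M MX)"
    and pol_fUX: "\<And>a x u. pol a x \<noteq> 0 \<Longrightarrow> fUX a u x \<noteq> 0"
  shows "AE \<omega> in M. AE a in mu. pol a (X \<omega>) \<noteq> 0 \<longrightarrow> fWX a (W \<omega>) (X \<omega>) \<noteq> 0"
proof -
  \<comment> \<open>the set {pol \<noteq> 0, fWX = 0} has zero density given (W, X), hence probability zero;
    given (U, X, W) its density is fUX, which is positive on it, so its sections are mu-null\<close>
  have K_WX: "cond_density_kernel M A mu (\<lambda>\<omega>. (W \<omega>, X \<omega>)) (MW \<Otimes>\<^sub>M MX) (\<lambda>a v. fWX a (fst v) (snd v))"
    by (rule cond_density_kernel_of_cond_density[OF prob _ _ densWX]) measurable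
  have K_UXW: "cond_density_kernel M A mu (\<lambda>\<omega>. ((U \<omega>, X \<omega>), W \<omega>)) ((MU \<Otimes>\<^sub>M MX) \<Otimes>\<^sub>M MW)
      (\<lambda>a p. fUX a (fst (fst p)) (snd (fst p)))"
    using cond_density_kernel_pair_of_cond_indep[OF prob base _ _ _ _ _ densUX ci] by simp
  define bad :: "('w \<times> 'x) \<times> 'a \<Rightarrow> ennreal" where
    "bad p = (if pol (snd p) (snd (fst p)) \<noteq> 0 \<and> fWX (snd p) (fst (fst p)) (snd (fst p)) = 0 then 1 else 0)"
    for p
  have "(\<lambda>p. (snd p, snd (fst p))) \<in> measurable ((MW \<Otimes>\<^sub>M MX) \<Otimes>\<^sub>M mu) (mu \<Otimes>\<^sub>M MX)" by measurable
  from measurable_compose[OF this pi_meas]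
  have [measurable]: "(\<lambda>p. pol (snd p) (snd (fst p))) \<in> borel_measurable ((MW \<Otimes>\<^sub>M MX) \<Otimes>\<^sub>M mu)"
    by simp
  note [measurable] = cond_density_kernel_measurable(1)[OF K_WX, simplified]
  have bad_meas[measurable]: "bad \<in> borel_measurable ((MW \<Otimes>\<^sub>M MX) \<Otimes>\<^sub>M mu)"
    unfolding bad_def by measurable
  have "(\<integral>\<^sup>+\<omega>. bad ((W \<omega>, X \<omega>), A \<omega>) \<partial>M)
      = (\<integral>\<^sup>+\<omega>. (\<integral>\<^sup>+a. ennreal (fWX a (W \<omega>) (X \<omega>)) * bad ((W \<omega>, X \<omega>), a) \<partial>mu) \<partial>M)"
    using nn_integral_cond_density_kernel[OF prob base _ _ K_WX bad_meas] by simp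
  also have "\<dots> = 0"
    by (simp add: bad_def if_distrib[of "\<lambda>t. ennreal _ * t"] cong: if_cong)
  finally have bad_null: "(\<integral>\<^sup>+\<omega>. bad ((W \<omega>, X \<omega>), A \<omega>) \<partial>M) = 0" .
  let ?bad_UXW = "\<lambda>p. bad ((snd (fst p), snd (fst (fst p))), snd p)"
  have "?bad_UXW \<in> borel_measurable (((MU \<Otimes>\<^sub>M MX) \<Otimes>\<^sub>M MW) \<Otimes>\<^sub>M mu)" by measurable
  from AE_cond_density_kernel_eq_0[OF prob base _ _ K_UXW this] bad_null
  have "AE \<omega> in M. AE a in mu. fUX a (U \<omega>) (X \<omega>) = 0 \<or> bad ((W \<omega>, X \<omega>), a) = 0"
    by simp
  then show ?thesis
  proof (rule AE_mp[OF _ AE_I2], intro impI)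
    fix \<omega> assume "AE a in mu. fUX a (U \<omega>) (X \<omega>) = 0 \<or> bad ((W \<omega>, X \<omega>), a) = 0"
    then show "AE a in mu. pol a (X \<omega>) \<noteq> 0 \<longrightarrow> fWX a (W \<omega>) (X \<omega>) \<noteq> 0"
      by eventually_elim (auto dest: pol_fUX simp: bad_def)
  qed
qed

section \<open>Conditional expectation of non-integrable differences\<close>

lemma (in sigma_finite_subalgebra) real_cond_exp_indicator_mult:
  assumes E: "E \<in> sets F" and d[measurable]: "d \<in> borel_measurable M"
  shows "AE x in M. indicator E x * real_cond_exp M F d x = real_cond_exp M F (\<lambda>x. indicator E x * d x) x"
proof -
  \<comment> \<open>real_cond_exp is built from the positive and negative parts, and the F-measurable
    indicator factors out of each; no integrability of d is needed\<close>
  have Em: "(indicator E :: _ \<Rightarrow> ennreal) \<in> borel_measurable F" using E by simp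
  have pos_part: "AE x in M. indicator E x * nn_cond_exp M F (\<lambda>x. ennreal (d x)) x
      = nn_cond_exp M F (\<lambda>x. indicator E x * ennreal (d x)) x"
    by (rule nn_cond_exp_prod[OF Em]) measurable
  have neg_part: "AE x in M. indicator E x * nn_cond_exp M F (\<lambda>x. ennreal (- d x)) x
      = nn_cond_exp M F (\<lambda>x. indicator E x * ennreal (- d x)) x"
    by (rule nn_cond_exp_prod[OF Em]) measurable
  have pos_eq: "(\<lambda>x. ennreal (indicator E x * d x)) = (\<lambda>x. indicator E x * ennreal (d x))"
    by (auto split: split_indicator)
  have neg_eq: "(\<lambda>x. ennreal (- (indicator E x * d x))) = (\<lambda>x. indicator E x * ennreal (- d x))"
    by (auto split: split_indicator)
  show ?thesis using pos_part neg_part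
  proof eventually_elim
    case (elim x)
    show ?case unfolding real_cond_exp_def pos_eq neg_eq elim(1)[symmetric] elim(2)[symmetric]
      by (auto split: split_indicator)
  qed
qed

lemma (in sigma_finite_subalgebra) real_cond_exp_diff_measurable_on_bounded:
  assumes "finite_measure M" and E: "E \<in> sets F" and g1: "integrable M g1"
    and g2[measurable]: "g2 \<in> borel_measurable F" and bounded: "\<And>x. x \<in> E \<Longrightarrow> \<bar>g2 x\<bar> \<le> b"
  shows "AE x in M. indicator E x * real_cond_exp M F (\<lambda>x. g1 x - g2 x) x
                    = indicator E x * (real_cond_exp M F g1 x - g2 x)"
proof -
  interpret finite_measure M by fact
  have [measurable]: "g2 \<in> borel_measurable M" by (rule measurable_from_subalg[OF subalg g2])
  have [measurable]: "g1 \<in> borel_measurable M" using g1 by auto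
  have [measurable]: "E \<in> sets M" using E subalg unfolding subalgebra_def by auto
  have E_F: "(\<lambda>x. indicator E x :: real) \<in> borel_measurable F" using E by simp
  have Eg1_int: "integrable M (\<lambda>x. indicator E x * g1 x)"
    using integrable_mult_indicator[OF _ g1, of E] by simp
  have Eg2_int: "integrable M (\<lambda>x. indicator E x * g2 x)"
    by (rule integrable_const_bound[where B="\<bar>b\<bar>"])
       (auto simp: indicator_def intro: order_trans[OF bounded abs_ge_self])
  have "AE x in M. indicator E x * real_cond_exp M F (\<lambda>x. g1 x - g2 x) x
      = real_cond_exp M F (\<lambda>x. indicator E x * (g1 x - g2 x)) x"
    by (rule real_cond_exp_indicator_mult[OF E]) measurable
  moreover have "AE x in M. real_cond_exp M F (\<lambda>x. indicator E x * (g1 x - g2 x)) x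
      = real_cond_exp M F (\<lambda>x. indicator E x * g1 x - indicator E x * g2 x) x"
    by (rule real_cond_exp_cong) (auto simp: algebra_simps)
  moreover have "AE x in M. real_cond_exp M F (\<lambda>x. indicator E x * g1 x - indicator E x * g2 x) x
      = real_cond_exp M F (\<lambda>x. indicator E x * g1 x) x - real_cond_exp M F (\<lambda>x. indicator E x * g2 x) x"
    by (rule real_cond_exp_diff[OF Eg1_int Eg2_int])
  moreover have "AE x in M. real_cond_exp M F (\<lambda>x. indicator E x * g1 x) x
      = indicator E x * real_cond_exp M F g1 x"
    by (rule real_cond_exp_mult[OF E_F _ Eg1_int]) measurable
  moreover have "AE x in M. real_cond_exp M F (\<lambda>x. indicator E x * g2 x) x = indicator E x * g2 x"
    by (rule real_cond_exp_F_meas[OF Eg2_int]) (use E_F in measurable)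
  ultimately show ?thesis by eventually_elim (simp add: algebra_simps)
qed

lemma real_cond_exp_diff_measurable:
  assumes "prob_space M" and "sigma_finite_subalgebra M F"
    and g1: "integrable M g1" and g2[measurable]: "g2 \<in> borel_measurable F"
  shows "AE x in M. real_cond_exp M F (\<lambda>x. g1 x - g2 x) x = real_cond_exp M F g1 x - g2 x"
proof -
  interpret prob_space M by fact
  interpret sfs: sigma_finite_subalgebra M F by fact
  \<comment> \<open>g2 need not be integrable: cut it off on the F-sets where it is bounded by n\<close>
  define E where "E n = {x \<in> space F. \<bar>g2 x\<bar> \<le> real n}" for n :: nat
  have "E n \<in> sets F" for n unfolding E_def by measurable
  from sfs.real_cond_exp_diff_measurable_on_bounded[OF finite_measure_axioms this g1 g2]
  have "AE x in M. \<forall>n. indicator (E n) x * real_cond_exp M F (\<lambda>x. g1 x - g2 x) x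
      = indicator (E n) x * (real_cond_exp M F g1 x - g2 x)"
    by (subst AE_all_countable) (auto simp: E_def)
  then show ?thesis
  proof (rule AE_mp[OF _ AE_I2], intro impI)
    fix x assume "x \<in> space M" and cut: "\<forall>n. indicator (E n) x * real_cond_exp M F (\<lambda>x. g1 x - g2 x) x
      = indicator (E n) x * (real_cond_exp M F g1 x - g2 x)"
    obtain n :: nat where "\<bar>g2 x\<bar> \<le> real n" using real_arch_simple by blast
    with \<open>x \<in> space M\<close> sfs.subalg have "x \<in> E n" by (simp add: E_def subalgebra_def)
    with cut[rule_format, of n] show "real_cond_exp M F (\<lambda>x. g1 x - g2 x) x = real_cond_exp M F g1 x - g2 x"
      by simp
  qed
qed

section \<open>Observed bridge functions\<close>

text \<open>The inverse probability weight pol(a|x) / f(a|w,x); since 1/0 = 0 it vanishes where the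
  density does, which is harmless only because f(a|w,x) > 0 wherever pol(a|x) \<noteq> 0.\<close>

definition ipw :: "('a \<Rightarrow> 'x \<Rightarrow> real) \<Rightarrow> ('a \<Rightarrow> 'w \<Rightarrow> 'x \<Rightarrow> real) \<Rightarrow> 'w \<times> 'a \<times> 'x \<Rightarrow> real" where
  "ipw pol fWX = (\<lambda>(w, a, x). pol a x * (1 / fWX a w x))"

lemma ipw_measurable:
  assumes pi_meas: "(\<lambda>p. pol (fst p) (snd p)) \<in> borel_measurable (mu \<Otimes>\<^sub>M MX)"
    and densWX: "cond_density M A mu (\<lambda>\<omega>. (W \<omega>, X \<omega>)) (MW \<Otimes>\<^sub>M MX) (\<lambda>a v. fWX a (fst v) (snd v))"
  shows "ipw pol fWX \<in> borel_measurable (MW \<Otimes>\<^sub>M mu \<Otimes>\<^sub>M MX)"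
proof -
  have fWX_meas: "(\<lambda>p. fWX (fst p) (fst (snd p)) (snd (snd p))) \<in> borel_measurable (mu \<Otimes>\<^sub>M (MW \<Otimes>\<^sub>M MX))"
    using densWX unfolding cond_density_def by simp
  have "(\<lambda>t. (fst (snd t), snd (snd t))) \<in> measurable (MW \<Otimes>\<^sub>M mu \<Otimes>\<^sub>M MX) (mu \<Otimes>\<^sub>M MX)"
    by measurable
  from measurable_compose[OF this pi_meas]
  have [measurable]: "(\<lambda>t. pol (fst (snd t)) (snd (snd t))) \<in> borel_measurable (MW \<Otimes>\<^sub>M mu \<Otimes>\<^sub>M MX)"
    by simp
  have "(\<lambda>t. (fst (snd t), (fst t, snd (snd t)))) \<in> measurable (MW \<Otimes>\<^sub>M mu \<Otimes>\<^sub>M MX) (mu \<Otimes>\<^sub>M (MW \<Otimes>\<^sub>M MX))"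
    by measurable
  from measurable_compose[OF this fWX_meas]
  have [measurable]: "(\<lambda>t. fWX (fst (snd t)) (fst t) (snd (snd t))) \<in> borel_measurable (MW \<Otimes>\<^sub>M mu \<Otimes>\<^sub>M MX)"
    by simp
  show ?thesis unfolding ipw_def case_prod_beta by measurable
qed

lemma cexp_Q0obs_condition:
  fixes pol :: "'a \<Rightarrow> 'x \<Rightarrow> real" and fWX :: "'a \<Rightarrow> 'w \<Rightarrow> 'x \<Rightarrow> real"
    and q :: "'z \<times> 'a \<times> 'x \<Rightarrow> real"
  assumes prob: "prob_space M"
    and [measurable]: "X \<in> measurable M MX" "A \<in> measurable M mu" "Z \<in> measurable M MZ"
      "W \<in> measurable M MW"
    and pi_meas: "(\<lambda>p. pol (fst p) (snd p)) \<in> borel_measurable (mu \<Otimes>\<^sub>M MX)"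
    and densWX: "cond_density M A mu (\<lambda>\<omega>. (W \<omega>, X \<omega>)) (MW \<Otimes>\<^sub>M MX) (\<lambda>a v. fWX a (fst v) (snd v))"
    and pq: "pimul pol q \<in> L2 M (\<lambda>\<omega>. (Z \<omega>, A \<omega>, X \<omega>)) (MZ \<Otimes>\<^sub>M mu \<Otimes>\<^sub>M MX)"
  shows "AE \<omega> in M. cexp M (\<lambda>\<omega>. (W \<omega>, A \<omega>, X \<omega>)) (MW \<Otimes>\<^sub>M mu \<Otimes>\<^sub>M MX)
           (\<lambda>\<omega>. pol (A \<omega>) (X \<omega>) * (q (Z \<omega>, A \<omega>, X \<omega>) - 1 / fWX (A \<omega>) (W \<omega>) (X \<omega>))) \<omega>
       = cexp M (\<lambda>\<omega>. (W \<omega>, A \<omega>, X \<omega>)) (MW \<Otimes>\<^sub>M mu \<Otimes>\<^sub>M MX) (\<lambda>\<omega>. pimul pol q (Z \<omega>, A \<omega>, X \<omega>)) \<omega>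
         - ipw pol fWX (W \<omega>, A \<omega>, X \<omega>)"
proof -
  let ?WAX = "\<lambda>\<omega>. (W \<omega>, A \<omega>, X \<omega>)" and ?MWAX = "MW \<Otimes>\<^sub>M mu \<Otimes>\<^sub>M MX"
  have "(\<lambda>\<omega>. pol (A \<omega>) (X \<omega>) * (q (Z \<omega>, A \<omega>, X \<omega>) - 1 / fWX (A \<omega>) (W \<omega>) (X \<omega>)))
      = (\<lambda>\<omega>. pimul pol q (Z \<omega>, A \<omega>, X \<omega>) - ipw pol fWX (?WAX \<omega>))"
    by (auto simp: pimul_def ipw_def algebra_simps)
  moreover have "AE \<omega> in M.
      real_cond_exp M (sig M ?WAX ?MWAX) (\<lambda>\<omega>. pimul pol q (Z \<omega>, A \<omega>, X \<omega>) - ipw pol fWX (?WAX \<omega>)) \<omega>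
      = real_cond_exp M (sig M ?WAX ?MWAX) (\<lambda>\<omega>. pimul pol q (Z \<omega>, A \<omega>, X \<omega>)) \<omega> - ipw pol fWX (?WAX \<omega>)"
  proof (rule real_cond_exp_diff_measurable[OF prob])
    show "sigma_finite_subalgebra M (sig M ?WAX ?MWAX)"
      by (rule sigma_finite_subalgebra_sig[OF prob]) measurable
    show "integrable M (\<lambda>\<omega>. pimul pol q (Z \<omega>, A \<omega>, X \<omega>))"
      by (rule integrable_L2_comp[OF _ pq]) (use prob in \<open>auto simp: prob_space_def\<close>)
    show "(\<lambda>\<omega>. ipw pol fWX (?WAX \<omega>)) \<in> borel_measurable (sig M ?WAX ?MWAX)"
      by (rule measurable_sig_comp[OF ipw_measurable[OF pi_meas densWX]]) measurable
  qed
  ultimately show ?thesis unfolding cexp_def by simp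
qed

lemma Tmap_measurable:
  assumes "sigma_finite_measure mu"
    and [measurable]: "X \<in> measurable M MX" "W \<in> measurable M MW"
    and pi_meas: "(\<lambda>p. pol (fst p) (snd p)) \<in> borel_measurable (mu \<Otimes>\<^sub>M MX)"
    and h_meas[measurable]: "h \<in> borel_measurable (MW \<Otimes>\<^sub>M mu \<Otimes>\<^sub>M MX)"
  shows "(\<lambda>\<omega>. Tmap mu pol h (W \<omega>) (X \<omega>)) \<in> borel_measurable M"
proof -
  interpret mu: sigma_finite_measure mu by fact
  have "(\<lambda>p. (W (fst p), snd p, X (fst p))) \<in> measurable (M \<Otimes>\<^sub>M mu) (MW \<Otimes>\<^sub>M mu \<Otimes>\<^sub>M MX)" by measurable
  from measurable_compose[OF this h_meas]
  have [measurable]: "(\<lambda>p. h (W (fst p), snd p, X (fst p))) \<in> borel_measurable (M \<Otimes>\<^sub>M mu)" by simp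
  have "(\<lambda>p. (snd p, X (fst p))) \<in> measurable (M \<Otimes>\<^sub>M mu) (mu \<Otimes>\<^sub>M MX)" by measurable
  from measurable_compose[OF this pi_meas]
  have [measurable]: "(\<lambda>p. pol (snd p) (X (fst p))) \<in> borel_measurable (M \<Otimes>\<^sub>M mu)" by simp
  have "case_prod (\<lambda>\<omega> a. h (W \<omega>, a, X \<omega>) * pol a (X \<omega>)) \<in> borel_measurable (M \<Otimes>\<^sub>M mu)"
    unfolding case_prod_beta by measurable
  from mu.borel_measurable_lebesgue_integral[OF this] show ?thesis by (simp add: Tmap_def)
qed

lemma integral_density_mult_ipw_eq_Tmap:
  assumes "w \<in> space MW" and "x \<in> space MX"
    and pi_meas: "(\<lambda>p. pol (fst p) (snd p)) \<in> borel_measurable (mu \<Otimes>\<^sub>M MX)"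
    and densWX: "cond_density M A mu (\<lambda>\<omega>. (W \<omega>, X \<omega>)) (MW \<Otimes>\<^sub>M MX) (\<lambda>a v. fWX a (fst v) (snd v))"
    and h_meas: "h \<in> borel_measurable (MW \<Otimes>\<^sub>M mu \<Otimes>\<^sub>M MX)"
    and nonzero: "AE a in mu. pol a x \<noteq> 0 \<longrightarrow> fWX a w x \<noteq> 0"
  shows "(\<integral>a. fWX a w x * (h (w, a, x) * ipw pol fWX (w, a, x)) \<partial>mu) = Tmap mu pol h w x"
  unfolding Tmap_def
proof (rule integral_cong_AE)
  have "(\<lambda>p. fWX (fst p) (fst (snd p)) (snd (snd p))) \<in> borel_measurable (mu \<Otimes>\<^sub>M (MW \<Otimes>\<^sub>M MX))"
    using densWX unfolding cond_density_def by simp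
  from measurable_compose[OF measurable_Pair2'[of "(w, x)"] this]
  have [measurable]: "(\<lambda>a. fWX a w x) \<in> borel_measurable mu" using assms(1,2) by (simp add: space_pair_measure)
  have "(\<lambda>a. (w, a, x)) \<in> measurable mu (MW \<Otimes>\<^sub>M mu \<Otimes>\<^sub>M MX)" using assms(1,2) by auto
  from measurable_compose[OF this h_meas]
  have [measurable]: "(\<lambda>a. h (w, a, x)) \<in> borel_measurable mu" by simp
  from measurable_compose[OF measurable_Pair2'[OF assms(2)] pi_meas]
  have [measurable]: "(\<lambda>a. pol a x) \<in> borel_measurable mu" by simp
  show "(\<lambda>a. fWX a w x * (h (w, a, x) * ipw pol fWX (w, a, x))) \<in> borel_measurable mu"
    by (simp add: ipw_def) measurable
  show "(\<lambda>a. h (w, a, x) * pol a x) \<in> borel_measurable mu" by measurable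
  show "AE a in mu. fWX a w x * (h (w, a, x) * ipw pol fWX (w, a, x)) = h (w, a, x) * pol a x"
    using nonzero by eventually_elim (auto simp: ipw_def)
qed

lemma integral_Tmap_eq_ipw:
  fixes pol :: "'a \<Rightarrow> 'x \<Rightarrow> real" and fWX :: "'a \<Rightarrow> 'w \<Rightarrow> 'x \<Rightarrow> real"
    and h :: "'w \<times> 'a \<times> 'x \<Rightarrow> real"
  assumes prob: "prob_space M" and base: "sigma_finite_measure mu"
    and rvX[measurable]: "X \<in> measurable M MX" and rvA[measurable]: "A \<in> measurable M mu"
    and rvW[measurable]: "W \<in> measurable M MW"
    and pi_meas: "(\<lambda>p. pol (fst p) (snd p)) \<in> borel_measurable (mu \<Otimes>\<^sub>M MX)"
    and densWX: "cond_density M A mu (\<lambda>\<omega>. (W \<omega>, X \<omega>)) (MW \<Otimes>\<^sub>M MX) (\<lambda>a v. fWX a (fst v) (snd v))"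
    and pos: "AE \<omega> in M. AE a in mu. pol a (X \<omega>) \<noteq> 0 \<longrightarrow> fWX a (W \<omega>) (X \<omega>) \<noteq> 0"
    and h_meas[measurable]: "h \<in> borel_measurable (MW \<Otimes>\<^sub>M mu \<Otimes>\<^sub>M MX)"
    and h_ipw_int: "integrable M (\<lambda>\<omega>. h (W \<omega>, A \<omega>, X \<omega>) * ipw pol fWX (W \<omega>, A \<omega>, X \<omega>))"
  shows "integrable M (\<lambda>\<omega>. Tmap mu pol h (W \<omega>) (X \<omega>))"
    and "(\<integral>\<omega>. Tmap mu pol h (W \<omega>) (X \<omega>) \<partial>M)
         = (\<integral>\<omega>. h (W \<omega>, A \<omega>, X \<omega>) * ipw pol fWX (W \<omega>, A \<omega>, X \<omega>) \<partial>M)"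
proof -
  interpret prob_space M by fact
  interpret mu: sigma_finite_measure mu by fact
  have K: "cond_density_kernel M A mu (\<lambda>\<omega>. (W \<omega>, X \<omega>)) (MW \<Otimes>\<^sub>M MX) (\<lambda>a v. fWX a (fst v) (snd v))"
    by (rule cond_density_kernel_of_cond_density[OF prob _ _ densWX]) measurable
  note [measurable] = ipw_measurable[OF pi_meas densWX]
  define G where "G p = h (fst (fst p), snd p, snd (fst p)) * ipw pol fWX (fst (fst p), snd p, snd (fst p))"
    for p :: "('w \<times> 'x) \<times> 'a"
  have G_meas: "G \<in> borel_measurable ((MW \<Otimes>\<^sub>M MX) \<Otimes>\<^sub>M mu)" unfolding G_def by measurable
  have WX_meas: "(\<lambda>\<omega>. (W \<omega>, X \<omega>)) \<in> measurable M (MW \<Otimes>\<^sub>M MX)" by measurable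
  note disintegrate = integral_cond_density_kernel[OF prob base WX_meas rvA K G_meas]
  have inner_eq_Tmap: "AE \<omega> in M. (\<integral>a. fWX a (W \<omega>) (X \<omega>) * G ((W \<omega>, X \<omega>), a) \<partial>mu)
      = Tmap mu pol h (W \<omega>) (X \<omega>)"
    using pos
  proof (rule AE_mp[OF _ AE_I2], intro impI)
    fix \<omega> assume \<omega>: "\<omega> \<in> space M"
      and nonzero: "AE a in mu. pol a (X \<omega>) \<noteq> 0 \<longrightarrow> fWX a (W \<omega>) (X \<omega>) \<noteq> 0"
    from integral_density_mult_ipw_eq_Tmap[OF measurable_space[OF rvW \<omega>] measurable_space[OF rvX \<omega>]
        pi_meas densWX h_meas nonzero]
    show "(\<integral>a. fWX a (W \<omega>) (X \<omega>) * G ((W \<omega>, X \<omega>), a) \<partial>mu) = Tmap mu pol h (W \<omega>) (X \<omega>)"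
      by (simp add: G_def)
  qed
  have Tmap_meas: "(\<lambda>\<omega>. Tmap mu pol h (W \<omega>) (X \<omega>)) \<in> borel_measurable M"
    by (rule Tmap_measurable[OF base rvX rvW pi_meas h_meas])
  have G_int: "integrable M (\<lambda>\<omega>. G ((W \<omega>, X \<omega>), A \<omega>))"
    using h_ipw_int by (simp add: G_def)
  have inner_int: "integrable M (\<lambda>\<omega>. \<integral>a. fWX a (W \<omega>) (X \<omega>) * G ((W \<omega>, X \<omega>), a) \<partial>mu)"
    using disintegrate(1)[OF G_int] by simp
  then show "integrable M (\<lambda>\<omega>. Tmap mu pol h (W \<omega>) (X \<omega>))"
    by (rule integrable_cong_AE_imp) (use inner_eq_Tmap Tmap_meas in auto)
  have "(\<integral>\<omega>. Tmap mu pol h (W \<omega>) (X \<omega>) \<partial>M)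
      = (\<integral>\<omega>. (\<integral>a. fWX a (W \<omega>) (X \<omega>) * G ((W \<omega>, X \<omega>), a) \<partial>mu) \<partial>M)"
    by (rule integral_cong_AE) (use inner_eq_Tmap Tmap_meas borel_measurable_integrable[OF inner_int] in auto)
  also have "\<dots> = (\<integral>\<omega>. G ((W \<omega>, X \<omega>), A \<omega>) \<partial>M)"
    using disintegrate(2)[OF G_int] by simp
  finally show "(\<integral>\<omega>. Tmap mu pol h (W \<omega>) (X \<omega>) \<partial>M)
      = (\<integral>\<omega>. h (W \<omega>, A \<omega>, X \<omega>) * ipw pol fWX (W \<omega>, A \<omega>, X \<omega>) \<partial>M)"
    by (simp add: G_def)
qed

lemma integral_Tmap_eq_Q0obs:
  fixes pol :: "'a \<Rightarrow> 'x \<Rightarrow> real" and fWX :: "'a \<Rightarrow> 'w \<Rightarrow> 'x \<Rightarrow> real"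
    and h :: "'w \<times> 'a \<times> 'x \<Rightarrow> real" and q0 :: "'z \<times> 'a \<times> 'x \<Rightarrow> real"
  assumes prob: "prob_space M" and base: "sigma_finite_measure mu"
    and rvX[measurable]: "X \<in> measurable M MX" and rvA[measurable]: "A \<in> measurable M mu"
    and rvZ[measurable]: "Z \<in> measurable M MZ" and rvW[measurable]: "W \<in> measurable M MW"
    and pi_meas: "(\<lambda>p. pol (fst p) (snd p)) \<in> borel_measurable (mu \<Otimes>\<^sub>M MX)"
    and densWX: "cond_density M A mu (\<lambda>\<omega>. (W \<omega>, X \<omega>)) (MW \<Otimes>\<^sub>M MX) (\<lambda>a v. fWX a (fst v) (snd v))"
    and pos: "AE \<omega> in M. AE a in mu. pol a (X \<omega>) \<noteq> 0 \<longrightarrow> fWX a (W \<omega>) (X \<omega>) \<noteq> 0"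
    and h_L2: "h \<in> L2 M (\<lambda>\<omega>. (W \<omega>, A \<omega>, X \<omega>)) (MW \<Otimes>\<^sub>M mu \<Otimes>\<^sub>M MX)"
    and q0: "q0 \<in> Q0obs M X MX A mu Z MZ W MW pol fWX"
  shows "integrable M (\<lambda>\<omega>. Tmap mu pol h (W \<omega>) (X \<omega>))"
    and "(\<integral>\<omega>. Tmap mu pol h (W \<omega>) (X \<omega>) \<partial>M)
         = (\<integral>\<omega>. pimul pol q0 (Z \<omega>, A \<omega>, X \<omega>) * h (W \<omega>, A \<omega>, X \<omega>) \<partial>M)"
proof -
  let ?WAX = "\<lambda>\<omega>. (W \<omega>, A \<omega>, X \<omega>)" and ?MWAX = "MW \<Otimes>\<^sub>M mu \<Otimes>\<^sub>M MX"
  let ?ZAX = "\<lambda>\<omega>. (Z \<omega>, A \<omega>, X \<omega>)" and ?MZAX = "MZ \<Otimes>\<^sub>M mu \<Otimes>\<^sub>M MX"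
  let ?F = "sig M ?WAX ?MWAX"
  interpret sfs: sigma_finite_subalgebra M ?F by (rule sigma_finite_subalgebra_sig[OF prob]) measurable
  have [measurable]: "h \<in> borel_measurable ?MWAX" using h_L2 unfolding L2_def by auto
  have pq0_L2: "pimul pol q0 \<in> L2 M ?ZAX ?MZAX" using q0 unfolding Q0obs_def by auto
  then have [measurable]: "pimul pol q0 \<in> borel_measurable ?MZAX" unfolding L2_def by auto
  note [measurable] = ipw_measurable[OF pi_meas densWX]
  have h_F: "(\<lambda>\<omega>. h (?WAX \<omega>)) \<in> borel_measurable ?F" by (rule measurable_sig_comp) measurable
  have h_pq0_int: "integrable M (\<lambda>\<omega>. h (?WAX \<omega>) * pimul pol q0 (?ZAX \<omega>))"
    by (rule integrable_L2_comp_mult[OF h_L2 pq0_L2]) measurable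
  \<comment> \<open>the defining property of q0 in Q0obs: E[pol q0 | W, A, X] = ipw\<close>
  have cexp_pq0: "AE \<omega> in M. real_cond_exp M ?F (\<lambda>\<omega>. pimul pol q0 (?ZAX \<omega>)) \<omega> = ipw pol fWX (?WAX \<omega>)"
  proof -
    have "AE \<omega> in M. cexp M ?WAX ?MWAX
        (\<lambda>\<omega>. pol (A \<omega>) (X \<omega>) * (q0 (?ZAX \<omega>) - 1 / fWX (A \<omega>) (W \<omega>) (X \<omega>))) \<omega> = 0"
      using q0 unfolding Q0obs_def by auto
    with cexp_Q0obs_condition[OF prob rvX rvA rvZ rvW pi_meas densWX pq0_L2]
    show ?thesis unfolding cexp_def by eventually_elim simp
  qed
  have "integrable M (\<lambda>\<omega>. h (?WAX \<omega>) * real_cond_exp M ?F (\<lambda>\<omega>. pimul pol q0 (?ZAX \<omega>)) \<omega>)"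
    by (rule sfs.real_cond_exp_intg(1)[OF h_pq0_int h_F]) measurable
  then have h_ipw_int: "integrable M (\<lambda>\<omega>. h (?WAX \<omega>) * ipw pol fWX (?WAX \<omega>))"
    by (rule integrable_cong_AE_imp) (use cexp_pq0 in auto)
  note Tmap_ipw = integral_Tmap_eq_ipw[OF prob base rvX rvA rvW pi_meas densWX pos _ h_ipw_int]
  show "integrable M (\<lambda>\<omega>. Tmap mu pol h (W \<omega>) (X \<omega>))" by (rule Tmap_ipw(1)) measurable
  have "(\<integral>\<omega>. Tmap mu pol h (W \<omega>) (X \<omega>) \<partial>M) = (\<integral>\<omega>. h (?WAX \<omega>) * ipw pol fWX (?WAX \<omega>) \<partial>M)"
    by (rule Tmap_ipw(2)) measurable
  also have "\<dots> = (\<integral>\<omega>. h (?WAX \<omega>) * real_cond_exp M ?F (\<lambda>\<omega>. pimul pol q0 (?ZAX \<omega>)) \<omega> \<partial>M)"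
    by (rule integral_cong_AE) (use cexp_pq0 h_ipw_int in auto)
  also have "\<dots> = (\<integral>\<omega>. h (?WAX \<omega>) * pimul pol q0 (?ZAX \<omega>) \<partial>M)"
    by (rule sfs.real_cond_exp_intg(2)[OF h_pq0_int h_F]) measurable
  finally show "(\<integral>\<omega>. Tmap mu pol h (W \<omega>) (X \<omega>) \<partial>M) = (\<integral>\<omega>. pimul pol q0 (?ZAX \<omega>) * h (?WAX \<omega>) \<partial>M)"
    by (simp add: mult.commute)
qed

lemma cexp_residual_H0obs:
  fixes h h0 :: "'w \<times> 'a \<times> 'x \<Rightarrow> real" and c :: "'z \<times> 'a \<times> 'x \<Rightarrow> real"
  assumes prob: "prob_space M"
    and [measurable]: "X \<in> measurable M MX" "A \<in> measurable M mu" "Z \<in> measurable M MZ"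
      "W \<in> measurable M MW" "Y \<in> borel_measurable M"
    and Y_L2: "integrable M (\<lambda>\<omega>. (Y \<omega>)\<^sup>2)"
    and h_L2: "h \<in> L2 M (\<lambda>\<omega>. (W \<omega>, A \<omega>, X \<omega>)) (MW \<Otimes>\<^sub>M mu \<Otimes>\<^sub>M MX)"
    and h0: "h0 \<in> H0obs M X MX A mu Z MZ W MW Y"
    and c_proj: "AE \<omega> in M. c (Z \<omega>, A \<omega>, X \<omega>)
                = cexp M (\<lambda>\<omega>. (Z \<omega>, A \<omega>, X \<omega>)) (MZ \<Otimes>\<^sub>M mu \<Otimes>\<^sub>M MX)
                    (\<lambda>\<omega>. h (W \<omega>, A \<omega>, X \<omega>) - h0 (W \<omega>, A \<omega>, X \<omega>)) \<omega>"
  shows "AE \<omega> in M. cexp M (\<lambda>\<omega>. (Z \<omega>, A \<omega>, X \<omega>)) (MZ \<Otimes>\<^sub>M mu \<Otimes>\<^sub>M MX)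
                      (\<lambda>\<omega>. h (W \<omega>, A \<omega>, X \<omega>) - Y \<omega>) \<omega> = c (Z \<omega>, A \<omega>, X \<omega>)"
    and "AE \<omega> in M. cexp M (\<lambda>\<omega>. (Z \<omega>, A \<omega>, X \<omega>)) (MZ \<Otimes>\<^sub>M mu \<Otimes>\<^sub>M MX)
                      (\<lambda>\<omega>. Y \<omega> - h (W \<omega>, A \<omega>, X \<omega>)) \<omega> = - c (Z \<omega>, A \<omega>, X \<omega>)"
proof -
  interpret prob_space M by fact
  let ?WAX = "\<lambda>\<omega>. (W \<omega>, A \<omega>, X \<omega>)" and ?MWAX = "MW \<Otimes>\<^sub>M mu \<Otimes>\<^sub>M MX"
  let ?ZAX = "\<lambda>\<omega>. (Z \<omega>, A \<omega>, X \<omega>)" and ?MZAX = "MZ \<Otimes>\<^sub>M mu \<Otimes>\<^sub>M MX"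
  let ?F = "sig M ?ZAX ?MZAX"
  interpret sfs: sigma_finite_subalgebra M ?F by (rule sigma_finite_subalgebra_sig[OF prob]) measurable
  have h0_L2: "h0 \<in> L2 M ?WAX ?MWAX"
    and h0_resid: "AE \<omega> in M. cexp M ?ZAX ?MZAX (\<lambda>\<omega>. Y \<omega> - h0 (?WAX \<omega>)) \<omega> = 0"
    using h0 unfolding H0obs_def by auto
  have h_int: "integrable M (\<lambda>\<omega>. h (?WAX \<omega>))" and h0_int: "integrable M (\<lambda>\<omega>. h0 (?WAX \<omega>))"
    by (rule integrable_L2_comp[OF finite_measure_axioms h_L2], measurable)
       (rule integrable_L2_comp[OF finite_measure_axioms h0_L2], measurable)
  have Y_int: "integrable M Y" by (rule integrable_of_square_integrable[OF finite_measure_axioms _ Y_L2]) measurable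
  have "(\<lambda>\<omega>. h (?WAX \<omega>) - Y \<omega>) = (\<lambda>\<omega>. (h (?WAX \<omega>) - h0 (?WAX \<omega>)) - (Y \<omega> - h0 (?WAX \<omega>)))"
    by auto
  moreover have "AE \<omega> in M. real_cond_exp M ?F (\<lambda>\<omega>. (h (?WAX \<omega>) - h0 (?WAX \<omega>)) - (Y \<omega> - h0 (?WAX \<omega>))) \<omega>
     = real_cond_exp M ?F (\<lambda>\<omega>. h (?WAX \<omega>) - h0 (?WAX \<omega>)) \<omega>
       - real_cond_exp M ?F (\<lambda>\<omega>. Y \<omega> - h0 (?WAX \<omega>)) \<omega>"
    by (rule sfs.real_cond_exp_diff) (use h_int h0_int Y_int in auto)
  ultimately show resid: "AE \<omega> in M. cexp M ?ZAX ?MZAX (\<lambda>\<omega>. h (?WAX \<omega>) - Y \<omega>) \<omega> = c (?ZAX \<omega>)"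
    using h0_resid c_proj unfolding cexp_def by (auto elim: AE_mp)
  have "AE \<omega> in M. real_cond_exp M ?F (\<lambda>\<omega>. Y \<omega> - h (?WAX \<omega>)) \<omega>
      = - real_cond_exp M ?F (\<lambda>\<omega>. h (?WAX \<omega>) - Y \<omega>) \<omega>"
    using sfs.real_cond_exp_cmult[OF Bochner_Integration.integrable_diff[OF h_int Y_int], of "-1"]
    by (simp add: borel_measurable_integrable[OF h_int] borel_measurable_integrable[OF Y_int])
  with resid show "AE \<omega> in M. cexp M ?ZAX ?MZAX (\<lambda>\<omega>. Y \<omega> - h (?WAX \<omega>)) \<omega> = - c (?ZAX \<omega>)"
    unfolding cexp_def by eventually_elim simp
qed

lemma critic_H0obs:
  fixes h h0 :: "'w \<times> 'a \<times> 'x \<Rightarrow> real" and c :: "'z \<times> 'a \<times> 'x \<Rightarrow> real"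
  assumes prob: "prob_space M"
    and rvs[measurable]: "X \<in> measurable M MX" "A \<in> measurable M mu" "Z \<in> measurable M MZ"
      "W \<in> measurable M MW" "Y \<in> borel_measurable M"
    and Y_L2: "integrable M (\<lambda>\<omega>. (Y \<omega>)\<^sup>2)"
    and h_L2: "h \<in> L2 M (\<lambda>\<omega>. (W \<omega>, A \<omega>, X \<omega>)) (MW \<Otimes>\<^sub>M mu \<Otimes>\<^sub>M MX)"
    and h0: "h0 \<in> H0obs M X MX A mu Z MZ W MW Y"
    and c_L2: "c \<in> L2 M (\<lambda>\<omega>. (Z \<omega>, A \<omega>, X \<omega>)) (MZ \<Otimes>\<^sub>M mu \<Otimes>\<^sub>M MX)"
    and c_proj: "AE \<omega> in M. c (Z \<omega>, A \<omega>, X \<omega>)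
                = cexp M (\<lambda>\<omega>. (Z \<omega>, A \<omega>, X \<omega>)) (MZ \<Otimes>\<^sub>M mu \<Otimes>\<^sub>M MX)
                    (\<lambda>\<omega>. h (W \<omega>, A \<omega>, X \<omega>) - h0 (W \<omega>, A \<omega>, X \<omega>)) \<omega>"
  shows "q \<in> L2 M (\<lambda>\<omega>. (Z \<omega>, A \<omega>, X \<omega>)) (MZ \<Otimes>\<^sub>M mu \<Otimes>\<^sub>M MX) \<Longrightarrow>
      (\<integral>\<omega>. q (Z \<omega>, A \<omega>, X \<omega>) * (h (W \<omega>, A \<omega>, X \<omega>) - Y \<omega>) \<partial>M)
      = (\<integral>\<omega>. q (Z \<omega>, A \<omega>, X \<omega>) * c (Z \<omega>, A \<omega>, X \<omega>) \<partial>M)"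
    and "h \<in> H0obs M X MX A mu Z MZ W MW Y \<longleftrightarrow> (AE \<omega> in M. c (Z \<omega>, A \<omega>, X \<omega>) = 0)"
proof -
  let ?WAX = "\<lambda>\<omega>. (W \<omega>, A \<omega>, X \<omega>)" and ?MWAX = "MW \<Otimes>\<^sub>M mu \<Otimes>\<^sub>M MX"
  let ?ZAX = "\<lambda>\<omega>. (Z \<omega>, A \<omega>, X \<omega>)" and ?MZAX = "MZ \<Otimes>\<^sub>M mu \<Otimes>\<^sub>M MX"
  let ?F = "sig M ?ZAX ?MZAX"
  interpret sfs: sigma_finite_subalgebra M ?F by (rule sigma_finite_subalgebra_sig[OF prob]) measurable
  note resid = cexp_residual_H0obs[OF prob rvs Y_L2 h_L2 h0 c_proj]
  show "h \<in> H0obs M X MX A mu Z MZ W MW Y \<longleftrightarrow> (AE \<omega> in M. c (?ZAX \<omega>) = 0)"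
    using resid(2) h_L2 unfolding H0obs_def by (auto elim: AE_mp)
  assume q_L2: "q \<in> L2 M ?ZAX ?MZAX"
  have [measurable]: "q \<in> borel_measurable ?MZAX" "c \<in> borel_measurable ?MZAX"
    "h \<in> borel_measurable ?MWAX"
    using q_L2 c_L2 h_L2 unfolding L2_def by auto
  have q_F: "(\<lambda>\<omega>. q (?ZAX \<omega>)) \<in> borel_measurable ?F" by (rule measurable_sig_comp) measurable
  have "integrable M (\<lambda>\<omega>. q (?ZAX \<omega>) * h (?WAX \<omega>) - q (?ZAX \<omega>) * Y \<omega>)"
    by (intro Bochner_Integration.integrable_diff integrable_L2_comp_mult[OF q_L2 h_L2]
        integrable_mult_square_integrable Y_L2) (use q_L2 in \<open>auto simp: L2_def\<close>)
  then have qr_int: "integrable M (\<lambda>\<omega>. q (?ZAX \<omega>) * (h (?WAX \<omega>) - Y \<omega>))"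
    by (simp add: algebra_simps)
  have "(\<integral>\<omega>. q (?ZAX \<omega>) * (h (?WAX \<omega>) - Y \<omega>) \<partial>M)
      = (\<integral>\<omega>. q (?ZAX \<omega>) * real_cond_exp M ?F (\<lambda>\<omega>. h (?WAX \<omega>) - Y \<omega>) \<omega> \<partial>M)"
    by (rule sfs.real_cond_exp_intg(2)[symmetric, OF qr_int q_F]) measurable
  also have "\<dots> = (\<integral>\<omega>. q (?ZAX \<omega>) * c (?ZAX \<omega>) \<partial>M)"
    by (rule integral_cong_AE) (use resid(1) in \<open>auto simp: cexp_def\<close>)
  finally show "(\<integral>\<omega>. q (?ZAX \<omega>) * (h (?WAX \<omega>) - Y \<omega>) \<partial>M) = (\<integral>\<omega>. q (?ZAX \<omega>) * c (?ZAX \<omega>) \<partial>M)" .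
qed

lemma cexp_residual_Q0obs:
  fixes pol :: "'a \<Rightarrow> 'x \<Rightarrow> real" and fWX :: "'a \<Rightarrow> 'w \<Rightarrow> 'x \<Rightarrow> real"
    and c :: "'w \<times> 'a \<times> 'x \<Rightarrow> real" and q q0 :: "'z \<times> 'a \<times> 'x \<Rightarrow> real"
  assumes prob: "prob_space M"
    and rvX[measurable]: "X \<in> measurable M MX" and rvA[measurable]: "A \<in> measurable M mu"
    and rvZ[measurable]: "Z \<in> measurable M MZ" and rvW[measurable]: "W \<in> measurable M MW"
    and pi_meas: "(\<lambda>p. pol (fst p) (snd p)) \<in> borel_measurable (mu \<Otimes>\<^sub>M MX)"
    and densWX: "cond_density M A mu (\<lambda>\<omega>. (W \<omega>, X \<omega>)) (MW \<Otimes>\<^sub>M MX) (\<lambda>a v. fWX a (fst v) (snd v))"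
    and pq_L2: "pimul pol q \<in> L2 M (\<lambda>\<omega>. (Z \<omega>, A \<omega>, X \<omega>)) (MZ \<Otimes>\<^sub>M mu \<Otimes>\<^sub>M MX)"
    and q0: "q0 \<in> Q0obs M X MX A mu Z MZ W MW pol fWX"
    and c_proj: "AE \<omega> in M. c (W \<omega>, A \<omega>, X \<omega>)
                = cexp M (\<lambda>\<omega>. (W \<omega>, A \<omega>, X \<omega>)) (MW \<Otimes>\<^sub>M mu \<Otimes>\<^sub>M MX)
                    (\<lambda>\<omega>. pimul pol q (Z \<omega>, A \<omega>, X \<omega>) - pimul pol q0 (Z \<omega>, A \<omega>, X \<omega>)) \<omega>"
  shows "AE \<omega> in M. cexp M (\<lambda>\<omega>. (W \<omega>, A \<omega>, X \<omega>)) (MW \<Otimes>\<^sub>M mu \<Otimes>\<^sub>M MX)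
      (\<lambda>\<omega>. pol (A \<omega>) (X \<omega>) * (q (Z \<omega>, A \<omega>, X \<omega>) - 1 / fWX (A \<omega>) (W \<omega>) (X \<omega>))) \<omega>
    = c (W \<omega>, A \<omega>, X \<omega>)"
proof -
  interpret prob_space M by fact
  let ?WAX = "\<lambda>\<omega>. (W \<omega>, A \<omega>, X \<omega>)" and ?MWAX = "MW \<Otimes>\<^sub>M mu \<Otimes>\<^sub>M MX"
  let ?ZAX = "\<lambda>\<omega>. (Z \<omega>, A \<omega>, X \<omega>)" and ?MZAX = "MZ \<Otimes>\<^sub>M mu \<Otimes>\<^sub>M MX"
  interpret sfs: sigma_finite_subalgebra M "sig M ?WAX ?MWAX"
    by (rule sigma_finite_subalgebra_sig[OF prob]) measurable
  have pq0_L2: "pimul pol q0 \<in> L2 M ?ZAX ?MZAX"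
    and q0_resid: "AE \<omega> in M. cexp M ?WAX ?MWAX
           (\<lambda>\<omega>. pol (A \<omega>) (X \<omega>) * (q0 (?ZAX \<omega>) - 1 / fWX (A \<omega>) (W \<omega>) (X \<omega>))) \<omega> = 0"
    using q0 unfolding Q0obs_def by auto
  have pq_int: "integrable M (\<lambda>\<omega>. pimul pol q (?ZAX \<omega>))"
    and pq0_int: "integrable M (\<lambda>\<omega>. pimul pol q0 (?ZAX \<omega>))"
    by (rule integrable_L2_comp[OF finite_measure_axioms pq_L2], measurable)
       (rule integrable_L2_comp[OF finite_measure_axioms pq0_L2], measurable)
  \<comment> \<open>both residuals are E[pol q | W, A, X] - ipw, so they differ by the projection c\<close>
  show ?thesis
    using cexp_Q0obs_condition[OF prob rvX rvA rvZ rvW pi_meas densWX pq_L2]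
      cexp_Q0obs_condition[OF prob rvX rvA rvZ rvW pi_meas densWX pq0_L2] q0_resid
      sfs.real_cond_exp_diff[OF pq_int pq0_int] c_proj
    unfolding cexp_def by eventually_elim simp
qed

lemma critic_Q0obs:
  fixes pol :: "'a \<Rightarrow> 'x \<Rightarrow> real" and fWX :: "'a \<Rightarrow> 'w \<Rightarrow> 'x \<Rightarrow> real"
    and h c :: "'w \<times> 'a \<times> 'x \<Rightarrow> real" and q q0 :: "'z \<times> 'a \<times> 'x \<Rightarrow> real"
  assumes prob: "prob_space M" and base: "sigma_finite_measure mu"
    and rvX[measurable]: "X \<in> measurable M MX" and rvA[measurable]: "A \<in> measurable M mu"
    and rvZ[measurable]: "Z \<in> measurable M MZ" and rvW[measurable]: "W \<in> measurable M MW"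
    and pi_meas: "(\<lambda>p. pol (fst p) (snd p)) \<in> borel_measurable (mu \<Otimes>\<^sub>M MX)"
    and densWX: "cond_density M A mu (\<lambda>\<omega>. (W \<omega>, X \<omega>)) (MW \<Otimes>\<^sub>M MX) (\<lambda>a v. fWX a (fst v) (snd v))"
    and pos: "AE \<omega> in M. AE a in mu. pol a (X \<omega>) \<noteq> 0 \<longrightarrow> fWX a (W \<omega>) (X \<omega>) \<noteq> 0"
    and pq_L2: "pimul pol q \<in> L2 M (\<lambda>\<omega>. (Z \<omega>, A \<omega>, X \<omega>)) (MZ \<Otimes>\<^sub>M mu \<Otimes>\<^sub>M MX)"
    and q0: "q0 \<in> Q0obs M X MX A mu Z MZ W MW pol fWX"
    and c_L2: "c \<in> L2 M (\<lambda>\<omega>. (W \<omega>, A \<omega>, X \<omega>)) (MW \<Otimes>\<^sub>M mu \<Otimes>\<^sub>M MX)"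
    and c_proj: "AE \<omega> in M. c (W \<omega>, A \<omega>, X \<omega>)
                = cexp M (\<lambda>\<omega>. (W \<omega>, A \<omega>, X \<omega>)) (MW \<Otimes>\<^sub>M mu \<Otimes>\<^sub>M MX)
                    (\<lambda>\<omega>. pimul pol q (Z \<omega>, A \<omega>, X \<omega>) - pimul pol q0 (Z \<omega>, A \<omega>, X \<omega>)) \<omega>"
  shows "h \<in> L2 M (\<lambda>\<omega>. (W \<omega>, A \<omega>, X \<omega>)) (MW \<Otimes>\<^sub>M mu \<Otimes>\<^sub>M MX) \<Longrightarrow>
      (\<integral>\<omega>. pol (A \<omega>) (X \<omega>) * q (Z \<omega>, A \<omega>, X \<omega>) * h (W \<omega>, A \<omega>, X \<omega>)
              - Tmap mu pol h (W \<omega>) (X \<omega>) \<partial>M)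
      = (\<integral>\<omega>. h (W \<omega>, A \<omega>, X \<omega>) * c (W \<omega>, A \<omega>, X \<omega>) \<partial>M)"
    and "q \<in> Q0obs M X MX A mu Z MZ W MW pol fWX \<longleftrightarrow> (AE \<omega> in M. c (W \<omega>, A \<omega>, X \<omega>) = 0)"
proof -
  interpret prob_space M by fact
  let ?WAX = "\<lambda>\<omega>. (W \<omega>, A \<omega>, X \<omega>)" and ?MWAX = "MW \<Otimes>\<^sub>M mu \<Otimes>\<^sub>M MX"
  let ?ZAX = "\<lambda>\<omega>. (Z \<omega>, A \<omega>, X \<omega>)" and ?MZAX = "MZ \<Otimes>\<^sub>M mu \<Otimes>\<^sub>M MX"
  let ?F = "sig M ?WAX ?MWAX"
  interpret sfs: sigma_finite_subalgebra M ?F by (rule sigma_finite_subalgebra_sig[OF prob]) measurable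
  show "q \<in> Q0obs M X MX A mu Z MZ W MW pol fWX \<longleftrightarrow> (AE \<omega> in M. c (?WAX \<omega>) = 0)"
    using cexp_residual_Q0obs[OF prob rvX rvA rvZ rvW pi_meas densWX pq_L2 q0 c_proj] pq_L2
    unfolding Q0obs_def by (auto elim: AE_mp)
  assume h_L2: "h \<in> L2 M ?WAX ?MWAX"
  have pq0_L2: "pimul pol q0 \<in> L2 M ?ZAX ?MZAX" using q0 unfolding Q0obs_def by auto
  have [measurable]: "pimul pol q \<in> borel_measurable ?MZAX" "pimul pol q0 \<in> borel_measurable ?MZAX"
    "h \<in> borel_measurable ?MWAX" "c \<in> borel_measurable ?MWAX"
    using pq_L2 pq0_L2 h_L2 c_L2 unfolding L2_def by auto
  note Tmap_q0 = integral_Tmap_eq_Q0obs[OF prob base rvX rvA rvZ rvW pi_meas densWX pos h_L2 q0]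
  have h_F: "(\<lambda>\<omega>. h (?WAX \<omega>)) \<in> borel_measurable ?F" by (rule measurable_sig_comp) measurable
  have pq_h_int: "integrable M (\<lambda>\<omega>. pimul pol q (?ZAX \<omega>) * h (?WAX \<omega>))"
    and pq0_h_int: "integrable M (\<lambda>\<omega>. pimul pol q0 (?ZAX \<omega>) * h (?WAX \<omega>))"
    by (rule integrable_L2_comp_mult[OF pq_L2 h_L2], measurable)
       (rule integrable_L2_comp_mult[OF pq0_L2 h_L2], measurable)
  have "integrable M (\<lambda>\<omega>. h (?WAX \<omega>) * (pimul pol q (?ZAX \<omega>) - pimul pol q0 (?ZAX \<omega>)))"
    using Bochner_Integration.integrable_diff[OF pq_h_int pq0_h_int] by (simp add: algebra_simps)
  note tower = sfs.real_cond_exp_intg(2)[OF this h_F]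
  have "(\<integral>\<omega>. pol (A \<omega>) (X \<omega>) * q (?ZAX \<omega>) * h (?WAX \<omega>) - Tmap mu pol h (W \<omega>) (X \<omega>) \<partial>M)
      = (\<integral>\<omega>. pimul pol q (?ZAX \<omega>) * h (?WAX \<omega>) \<partial>M) - (\<integral>\<omega>. Tmap mu pol h (W \<omega>) (X \<omega>) \<partial>M)"
    using Bochner_Integration.integral_diff[OF pq_h_int Tmap_q0(1)] by (simp add: pimul_def)
  also have "\<dots> = (\<integral>\<omega>. h (?WAX \<omega>) * (pimul pol q (?ZAX \<omega>) - pimul pol q0 (?ZAX \<omega>)) \<partial>M)"
    using Bochner_Integration.integral_diff[OF pq_h_int pq0_h_int] by (simp add: Tmap_q0(2) algebra_simps)
  also have "\<dots> = (\<integral>\<omega>. h (?WAX \<omega>) * real_cond_exp M ?F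
      (\<lambda>\<omega>. pimul pol q (?ZAX \<omega>) - pimul pol q0 (?ZAX \<omega>)) \<omega> \<partial>M)"
    by (rule tower[symmetric]) measurable
  also have "\<dots> = (\<integral>\<omega>. h (?WAX \<omega>) * c (?WAX \<omega>) \<partial>M)"
    by (rule integral_cong_AE) (use c_proj in \<open>auto simp: cexp_def\<close>)
  finally show "(\<integral>\<omega>. pol (A \<omega>) (X \<omega>) * q (?ZAX \<omega>) * h (?WAX \<omega>) - Tmap mu pol h (W \<omega>) (X \<omega>) \<partial>M)
      = (\<integral>\<omega>. h (?WAX \<omega>) * c (?WAX \<omega>) \<partial>M)" .
qed

lemma H0obs_inter_eq_argmin_on:
  fixes H :: "('w \<times> 'a \<times> 'x \<Rightarrow> real) set" and Q' :: "('z \<times> 'a \<times> 'x \<Rightarrow> real) set"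
  assumes prob: "prob_space M"
    and rvX[measurable]: "X \<in> measurable M MX" and rvA[measurable]: "A \<in> measurable M mu"
    and rvZ[measurable]: "Z \<in> measurable M MZ" and rvW[measurable]: "W \<in> measurable M MW"
    and rvY[measurable]: "Y \<in> borel_measurable M" and Y_L2: "integrable M (\<lambda>\<omega>. (Y \<omega>)\<^sup>2)"
    and H_L2: "H \<subseteq> L2 M (\<lambda>\<omega>. (W \<omega>, A \<omega>, X \<omega>)) (MW \<Otimes>\<^sub>M mu \<Otimes>\<^sub>M MX)"
    and H_ne: "H0obs M X MX A mu Z MZ W MW Y \<inter> H \<noteq> {}"
    and Q'_L2: "Q' \<subseteq> L2 M (\<lambda>\<omega>. (Z \<omega>, A \<omega>, X \<omega>)) (MZ \<Otimes>\<^sub>M mu \<Otimes>\<^sub>M MX)"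
    and PzH: "\<forall>h\<in>H. \<forall>h0\<in>H0obs M X MX A mu Z MZ W MW Y. \<exists>q\<in>Q'. AE \<omega> in M.
                q (Z \<omega>, A \<omega>, X \<omega>)
                = cexp M (\<lambda>\<omega>. (Z \<omega>, A \<omega>, X \<omega>)) (MZ \<Otimes>\<^sub>M mu \<Otimes>\<^sub>M MX)
                    (\<lambda>\<omega>. h (W \<omega>, A \<omega>, X \<omega>) - h0 (W \<omega>, A \<omega>, X \<omega>)) \<omega>"
    and lam: "0 < lam" and shape: "star_shaped Q' \<or> lam < 1"
  shows "H0obs M X MX A mu Z MZ W MW Y \<inter> H =
           argmin_on H (\<lambda>h. SUP q\<in>Q'. ereal
             ((\<integral>\<omega>. q (Z \<omega>, A \<omega>, X \<omega>) * (h (W \<omega>, A \<omega>, X \<omega>) - Y \<omega>) \<partial>M)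
              - lam * (\<integral>\<omega>. (q (Z \<omega>, A \<omega>, X \<omega>))\<^sup>2 \<partial>M)))"
proof (rule argmin_on_eq_by_critic[OF _ Q'_L2 lam shape _ H_ne])
  let ?WAX = "\<lambda>\<omega>. (W \<omega>, A \<omega>, X \<omega>)"
  let ?ZAX = "\<lambda>\<omega>. (Z \<omega>, A \<omega>, X \<omega>)" and ?MZAX = "MZ \<Otimes>\<^sub>M mu \<Otimes>\<^sub>M MX"
  show "?ZAX \<in> measurable M ?MZAX" by measurable
  fix h assume "h \<in> H"
  with PzH H_ne obtain h0 c where h0: "h0 \<in> H0obs M X MX A mu Z MZ W MW Y" and c: "c \<in> Q'"
    and c_proj: "AE \<omega> in M. c (?ZAX \<omega>) = cexp M ?ZAX ?MZAX (\<lambda>\<omega>. h (?WAX \<omega>) - h0 (?WAX \<omega>)) \<omega>"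
    by blast
  note critic = critic_H0obs[OF prob rvX rvA rvZ rvW rvY Y_L2 _ h0 _ c_proj]
  show "\<exists>c\<in>Q'. (\<forall>q\<in>Q'. (\<integral>\<omega>. q (?ZAX \<omega>) * (h (?WAX \<omega>) - Y \<omega>) \<partial>M)
            - lam * (\<integral>\<omega>. (q (?ZAX \<omega>))\<^sup>2 \<partial>M) = penalized_pairing M ?ZAX lam c q)
      \<and> (h \<in> H0obs M X MX A mu Z MZ W MW Y \<inter> H \<longleftrightarrow> (AE \<omega> in M. c (?ZAX \<omega>) = 0))"
    using c critic \<open>h \<in> H\<close> H_L2 Q'_L2 by (auto simp: penalized_pairing_def)
qed auto

lemma Q0obs_inter_eq_argmin_on:
  fixes pol :: "'a \<Rightarrow> 'x \<Rightarrow> real" and fWX :: "'a \<Rightarrow> 'w \<Rightarrow> 'x \<Rightarrow> real"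
    and H' :: "('w \<times> 'a \<times> 'x \<Rightarrow> real) set" and Q :: "('z \<times> 'a \<times> 'x \<Rightarrow> real) set"
  assumes prob: "prob_space M" and base: "sigma_finite_measure mu"
    and rvX[measurable]: "X \<in> measurable M MX" and rvA[measurable]: "A \<in> measurable M mu"
    and rvZ[measurable]: "Z \<in> measurable M MZ" and rvW[measurable]: "W \<in> measurable M MW"
    and pi_meas: "(\<lambda>p. pol (fst p) (snd p)) \<in> borel_measurable (mu \<Otimes>\<^sub>M MX)"
    and densWX: "cond_density M A mu (\<lambda>\<omega>. (W \<omega>, X \<omega>)) (MW \<Otimes>\<^sub>M MX) (\<lambda>a v. fWX a (fst v) (snd v))"
    and pos: "AE \<omega> in M. AE a in mu. pol a (X \<omega>) \<noteq> 0 \<longrightarrow> fWX a (W \<omega>) (X \<omega>) \<noteq> 0"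
    and Q_L2: "pimul pol ` Q \<subseteq> L2 M (\<lambda>\<omega>. (Z \<omega>, A \<omega>, X \<omega>)) (MZ \<Otimes>\<^sub>M mu \<Otimes>\<^sub>M MX)"
    and Q_ne: "Q0obs M X MX A mu Z MZ W MW pol fWX \<inter> Q \<noteq> {}"
    and H'_L2: "H' \<subseteq> L2 M (\<lambda>\<omega>. (W \<omega>, A \<omega>, X \<omega>)) (MW \<Otimes>\<^sub>M mu \<Otimes>\<^sub>M MX)"
    and PwQ: "\<forall>q\<in>Q. \<forall>q0\<in>Q0obs M X MX A mu Z MZ W MW pol fWX. \<exists>h\<in>H'. AE \<omega> in M.
                h (W \<omega>, A \<omega>, X \<omega>)
                = cexp M (\<lambda>\<omega>. (W \<omega>, A \<omega>, X \<omega>)) (MW \<Otimes>\<^sub>M mu \<Otimes>\<^sub>M MX)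
                    (\<lambda>\<omega>. pimul pol q (Z \<omega>, A \<omega>, X \<omega>) - pimul pol q0 (Z \<omega>, A \<omega>, X \<omega>)) \<omega>"
    and lam: "0 < lam" and shape: "star_shaped H' \<or> lam < 1"
  shows "Q0obs M X MX A mu Z MZ W MW pol fWX \<inter> Q =
           argmin_on Q (\<lambda>q. SUP h\<in>H'. ereal
             ((\<integral>\<omega>. pol (A \<omega>) (X \<omega>) * q (Z \<omega>, A \<omega>, X \<omega>) * h (W \<omega>, A \<omega>, X \<omega>)
                     - Tmap mu pol h (W \<omega>) (X \<omega>) \<partial>M)
              - lam * (\<integral>\<omega>. (h (W \<omega>, A \<omega>, X \<omega>))\<^sup>2 \<partial>M)))"
proof (rule argmin_on_eq_by_critic[OF _ H'_L2 lam shape _ Q_ne])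
  let ?WAX = "\<lambda>\<omega>. (W \<omega>, A \<omega>, X \<omega>)" and ?MWAX = "MW \<Otimes>\<^sub>M mu \<Otimes>\<^sub>M MX"
  let ?ZAX = "\<lambda>\<omega>. (Z \<omega>, A \<omega>, X \<omega>)"
  show "?WAX \<in> measurable M ?MWAX" by measurable
  obtain q0 where q0: "q0 \<in> Q0obs M X MX A mu Z MZ W MW pol fWX" using Q_ne by auto
  fix q assume "q \<in> Q"
  with PwQ q0 obtain c where c: "c \<in> H'"
    and c_proj: "AE \<omega> in M. c (?WAX \<omega>)
           = cexp M ?WAX ?MWAX (\<lambda>\<omega>. pimul pol q (?ZAX \<omega>) - pimul pol q0 (?ZAX \<omega>)) \<omega>"
    by blast
  note critic = critic_Q0obs[OF prob base rvX rvA rvZ rvW pi_meas densWX pos _ q0 _ c_proj]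
  show "\<exists>c\<in>H'. (\<forall>h\<in>H'. (\<integral>\<omega>. pol (A \<omega>) (X \<omega>) * q (?ZAX \<omega>) * h (?WAX \<omega>)
            - Tmap mu pol h (W \<omega>) (X \<omega>) \<partial>M) - lam * (\<integral>\<omega>. (h (?WAX \<omega>))\<^sup>2 \<partial>M)
            = penalized_pairing M ?WAX lam c h)
      \<and> (q \<in> Q0obs M X MX A mu Z MZ W MW pol fWX \<inter> Q \<longleftrightarrow> (AE \<omega> in M. c (?WAX \<omega>) = 0))"
    using c critic \<open>q \<in> Q\<close> Q_L2 H'_L2 by (auto simp: penalized_pairing_def)
qed auto

theorem mainTheorem7:
  fixes M :: "'o measure"
    and U :: "'o \<Rightarrow> 'u" and MU :: "'u measure"
    and X :: "'o \<Rightarrow> 'x" and MX :: "'x measure"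
    and A :: "'o \<Rightarrow> 'a" and mu :: "'a measure"
    and Z :: "'o \<Rightarrow> 'z" and MZ :: "'z measure"
    and W :: "'o \<Rightarrow> 'w" and MW :: "'w measure"
    and Y :: "'o \<Rightarrow> real"
    and Ya :: "'a \<Rightarrow> 'o \<Rightarrow> real"
    and Yaz :: "'a \<Rightarrow> 'z \<Rightarrow> 'o \<Rightarrow> real"
    and Waz :: "'a \<Rightarrow> 'z \<Rightarrow> 'o \<Rightarrow> 'w"
    and pol :: "'a \<Rightarrow> 'x \<Rightarrow> real"
    and fUX :: "'a \<Rightarrow> 'u \<Rightarrow> 'x \<Rightarrow> real"
    and fWX :: "'a \<Rightarrow> 'w \<Rightarrow> 'x \<Rightarrow> real"
    and H H' :: "('w \<times> 'a \<times> 'x \<Rightarrow> real) set"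
    and Q Q' :: "('z \<times> 'a \<times> 'x \<Rightarrow> real) set"
    and lam :: real
  assumes prob: "prob_space M"
    and base: "sigma_finite_measure mu"
    and rvU: "U \<in> measurable M MU" and rvX: "X \<in> measurable M MX"
    and rvA: "A \<in> measurable M mu" and rvZ: "Z \<in> measurable M MZ"
    and rvW: "W \<in> measurable M MW" and rvY: "Y \<in> borel_measurable M"
    and Y_L2: "integrable M (\<lambda>\<omega>. (Y \<omega>)\<^sup>2)"
    and rvYa: "\<And>a. Ya a \<in> borel_measurable M"
    and pi_meas: "(\<lambda>p. pol (fst p) (snd p)) \<in> borel_measurable (mu \<Otimes>\<^sub>M MX)"
    and densUX: "cond_density M A mu (\<lambda>\<omega>. (U \<omega>, X \<omega>)) (MU \<Otimes>\<^sub>M MX)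
                   (\<lambda>a v. fUX a (fst v) (snd v))"
    and densWX: "cond_density M A mu (\<lambda>\<omega>. (W \<omega>, X \<omega>)) (MW \<Otimes>\<^sub>M MX)
                   (\<lambda>a v. fWX a (fst v) (snd v))"
    \<comment> \<open>Assumption (NC)\<close>
    and NC1: "(AE \<omega> in M. Y \<omega> = Yaz (A \<omega>) (Z \<omega>) \<omega>) \<and> (AE \<omega> in M. W \<omega> = Waz (A \<omega>) (Z \<omega>) \<omega>)"
    and NC2: "\<And>a z. AE \<omega> in M. Yaz a z \<omega> = Ya a \<omega>"
    and NC3: "\<And>a z. AE \<omega> in M. Waz a z \<omega> = W \<omega>"
    and NC4: "\<And>a. cond_indep M (\<lambda>\<omega>. (Z \<omega>, A \<omega>)) (MZ \<Otimes>\<^sub>M mu)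
                 (\<lambda>\<omega>. (Ya a \<omega>, W \<omega>)) (borel \<Otimes>\<^sub>M MW) (\<lambda>\<omega>. (U \<omega>, X \<omega>)) (MU \<Otimes>\<^sub>M MX)"
    and NC5: "\<And>a x u. pol a x \<noteq> 0 \<Longrightarrow> fUX a u x \<noteq> 0"
    \<comment> \<open>Assumption (B)\<close>
    and B1: "H0 M U MU X MX A mu W MW Y \<noteq> {}"
    and B2: "Q0 M U MU X MX A mu Z MZ pol fUX \<noteq> {}"
    \<comment> \<open>function classes\<close>
    and H_L2: "H \<subseteq> L2 M (\<lambda>\<omega>. (W \<omega>, A \<omega>, X \<omega>)) (MW \<Otimes>\<^sub>M mu \<Otimes>\<^sub>M MX)"
    and Q_L2: "pimul pol ` Q \<subseteq> L2 M (\<lambda>\<omega>. (Z \<omega>, A \<omega>, X \<omega>)) (MZ \<Otimes>\<^sub>M mu \<Otimes>\<^sub>M MX)"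
    and H_ne: "H0obs M X MX A mu Z MZ W MW Y \<inter> H \<noteq> {}"
    and Q_ne: "Q0obs M X MX A mu Z MZ W MW pol fWX \<inter> Q \<noteq> {}"
    and Q'_L2: "Q' \<subseteq> L2 M (\<lambda>\<omega>. (Z \<omega>, A \<omega>, X \<omega>)) (MZ \<Otimes>\<^sub>M mu \<Otimes>\<^sub>M MX)"
    and H'_L2: "H' \<subseteq> L2 M (\<lambda>\<omega>. (W \<omega>, A \<omega>, X \<omega>)) (MW \<Otimes>\<^sub>M mu \<Otimes>\<^sub>M MX)"
    and PzH: "\<forall>h\<in>H. \<forall>h0\<in>H0obs M X MX A mu Z MZ W MW Y. \<exists>q\<in>Q'. AE \<omega> in M.
                q (Z \<omega>, A \<omega>, X \<omega>)
                = cexp M (\<lambda>\<omega>. (Z \<omega>, A \<omega>, X \<omega>)) (MZ \<Otimes>\<^sub>M mu \<Otimes>\<^sub>M MX)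
                    (\<lambda>\<omega>. h (W \<omega>, A \<omega>, X \<omega>) - h0 (W \<omega>, A \<omega>, X \<omega>)) \<omega>"
    and PwQ: "\<forall>q\<in>Q. \<forall>q0\<in>Q0obs M X MX A mu Z MZ W MW pol fWX. \<exists>h\<in>H'. AE \<omega> in M.
                h (W \<omega>, A \<omega>, X \<omega>)
                = cexp M (\<lambda>\<omega>. (W \<omega>, A \<omega>, X \<omega>)) (MW \<Otimes>\<^sub>M mu \<Otimes>\<^sub>M MX)
                    (\<lambda>\<omega>. pimul pol q (Z \<omega>, A \<omega>, X \<omega>) - pimul pol q0 (Z \<omega>, A \<omega>, X \<omega>)) \<omega>"
    and lam_pos: "lam > 0"
    and star_or_half: "(star_shaped Q' \<and> star_shaped H') \<or> lam = 1/2"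
  shows "(H0obs M X MX A mu Z MZ W MW Y \<inter> H =
           argmin_on H (\<lambda>h. SUP q\<in>Q'. ereal
             ((\<integral>\<omega>. q (Z \<omega>, A \<omega>, X \<omega>) * (h (W \<omega>, A \<omega>, X \<omega>) - Y \<omega>) \<partial>M)
              - lam * (\<integral>\<omega>. (q (Z \<omega>, A \<omega>, X \<omega>))\<^sup>2 \<partial>M)))) \<and>
         (Q0obs M X MX A mu Z MZ W MW pol fWX \<inter> Q =
           argmin_on Q (\<lambda>q. SUP h\<in>H'. ereal
             ((\<integral>\<omega>. pol (A \<omega>) (X \<omega>) * q (Z \<omega>, A \<omega>, X \<omega>) * h (W \<omega>, A \<omega>, X \<omega>)
                     - Tmap mu pol h (W \<omega>) (X \<omega>) \<partial>M)
              - lam * (\<integral>\<omega>. (h (W \<omega>, A \<omega>, X \<omega>))\<^sup>2 \<partial>M))))"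
proof -
  \<comment> \<open>only the W-component of (NC)(iv) is used, so any potential outcome Ya a will do\<close>
  have pos: "AE \<omega> in M. AE a in mu. pol a (X \<omega>) \<noteq> 0 \<longrightarrow> fWX a (W \<omega>) (X \<omega>) \<noteq> 0"
    by (rule AE_cond_density_nonzero_of_cond_indep[OF prob base rvU rvX rvA rvZ rvW rvYa
          pi_meas densUX densWX NC4 NC5])
  have shape: "star_shaped Q' \<or> lam < 1" "star_shaped H' \<or> lam < 1" using star_or_half by auto
  show ?thesis
    using H0obs_inter_eq_argmin_on[OF prob rvX rvA rvZ rvW rvY Y_L2 H_L2 H_ne Q'_L2 PzH lam_pos shape(1)]
      Q0obs_inter_eq_argmin_on[OF prob base rvX rvA rvZ rvW pi_meas densWX pos Q_L2 Q_ne H'_L2 PwQ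
        lam_pos shape(2)]
    by blast
qed

end
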